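(* There is a constant $C_6>0$ depending only on $d,s,\alpha,\Lambda$ such that for every non-trivial $\Lambda$-good measure $\mu$ (and any admissible choice of $B',\eta$ in the definition of $\widetilde T_{\mu,\delta}(1)$), every $\delta>0$ and all $x,x'\in\mathbb{R}^d$, $$|\widetilde T_{\mu,\delta}(1)(x)-\widetilde T_{\mu,\delta}(1)(x')|\le\frac{C_6|x-x'|^\alpha}{\delta^\alpha}\max\Bigl(1,\frac{|x-x'|}{\delta}\Bigr)^{1-\alpha}.$$
   Context: Fix $d\ge2$, $d'\ge1$, $s\in(0,d)$, $\alpha\in(0,1]$; $\Omega:\mathbb{R}^d\to\mathbb{C}^{d'}$ with $\Omega(\lambda x)=\lambda\Omega(x)$ for $\lambda\in\mathbb{R}$, $|\Omega|\le1$ and $|\Omega(x)-\Omega(x')|\le|x-x'|^\alpha$ on the unit sphere, $\Omega$ odd; $K(x)=\Omega(x)/|x|^{s+1}$, $K_\delta(x)=\Omega(x)/\max(\delta,|x|)^{s+1}$. Measures are nonnegative locally finite Borel measures; $\langle f,g\rangle_\mu=\int f\cdot g\,d\mu$. $\mu$ is $\Lambda$-nice if $\mu(B(x,r))\le\Lambda r^s$ for all balls; $T_{\mu,\delta}f(x)=\int K_\delta(x-y)f(y)d\mu(y)$; $\mu$ is $\Lambda$-good if $\Lambda$-nice and $\|T_{\mu,\delta}\|_{L^2(\mu)\to L^2(\mu)}\le\Lambda$ for all $\delta$, and $T_\mu$ is the bounded operator with $\langle T_\mu f,g\rangle_\mu=\lim_{\delta\to0}\langle T_{\mu,\delta}f,g\rangle_\mu$.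 For non-trivial $\Lambda$-good $\mu$: fix a ball $B'$ with $\mu(B')>0$ and nonnegative Lipschitz $\eta$ compactly supported in $B'$ with $\int\eta d\mu=1$; for $x\in\mathbb{R}^d$, $\delta>0$, pick a ball $B$ containing $x$ and $B'$ and compactly supported $\varphi\in L^2(\mu)$ with $\varphi\equiv1$ on $2B$, $0\le\varphi\le1$, and set $\widetilde T_{\mu,\delta}(1)(x)=T_{\mu,\delta}(\varphi)(x)-\int\eta\,T_\mu(\varphi)d\mu+\int(1-\varphi(y))\int\eta(z)[K_\delta(x-y)-K(z-y)]d\mu(z)d\mu(y)$ (independent of $B,\varphi$). *)

theory Defs
  imports "HOL-Analysis.Analysis"
begin

definition omega_adm :: "real \<Rightarrow> (real^'n \<Rightarrow> complex^'m) \<Rightarrow> bool" where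
  "omega_adm \<alpha> \<Omega> \<longleftrightarrow>
     (\<forall>c::real. \<forall>x. \<Omega> (c *\<^sub>R x) = c *\<^sub>R \<Omega> x) \<and>
     (\<forall>x. \<Omega> (- x) = - \<Omega> x) \<and>
     (\<forall>x. norm x = 1 \<longrightarrow> norm (\<Omega> x) \<le> 1) \<and>
     (\<forall>x y. norm x = 1 \<longrightarrow> norm y = 1 \<longrightarrow> norm (\<Omega> x - \<Omega> y) \<le> norm (x - y) powr \<alpha>)"

definition Ker :: "(real^'n \<Rightarrow> complex^'m) \<Rightarrow> real \<Rightarrow> real^'n \<Rightarrow> complex^'m" where
  "Ker \<Omega> s x = (1 / (norm x powr (s + 1))) *\<^sub>R \<Omega> x"

definition Kd :: "(real^'n \<Rightarrow> complex^'m) \<Rightarrow> real \<Rightarrow> real \<Rightarrow> real^'n \<Rightarrow> complex^'m" where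
  "Kd \<Omega> s \<delta> x = (1 / (max \<delta> (norm x) powr (s + 1))) *\<^sub>R \<Omega> x"

definition Tdelta :: "(real^'n \<Rightarrow> complex^'m) \<Rightarrow> real \<Rightarrow> (real^'n) measure \<Rightarrow> real
                        \<Rightarrow> (real^'n \<Rightarrow> complex) \<Rightarrow> real^'n \<Rightarrow> complex^'m" where
  "Tdelta \<Omega> s \<mu> \<delta> f x = integral\<^sup>L \<mu> (\<lambda>y. \<chi> i. f y * (Kd \<Omega> s \<delta> (x - y) $ i))"

definition nice :: "real \<Rightarrow> real \<Rightarrow> (real^'n) measure \<Rightarrow> bool" where
  "nice s \<Lambda> \<mu> \<longleftrightarrow> sets \<mu> = sets borel \<and>
     (\<forall>x r. r > 0 \<longrightarrow> emeasure \<mu> (ball x r) \<le> ennreal (\<Lambda> * r powr s))"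

definition good :: "(real^'n \<Rightarrow> complex^'m) \<Rightarrow> real \<Rightarrow> real \<Rightarrow> (real^'n) measure \<Rightarrow> bool" where
  "good \<Omega> s \<Lambda> \<mu> \<longleftrightarrow> nice s \<Lambda> \<mu> \<and>
     (\<forall>\<delta>>0. \<forall>f::real^'n \<Rightarrow> complex. f \<in> borel_measurable \<mu> \<longrightarrow>
        (\<integral>\<^sup>+ y. ennreal ((norm (f y))\<^sup>2) \<partial>\<mu>) < \<infinity> \<longrightarrow>
        (\<integral>\<^sup>+ x. ennreal ((norm (Tdelta \<Omega> s \<mu> \<delta> f x))\<^sup>2) \<partial>\<mu>)
          \<le> ennreal (\<Lambda>\<^sup>2) * (\<integral>\<^sup>+ y. ennreal ((norm (f y))\<^sup>2) \<partial>\<mu>))"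

definition eta_adm :: "(real^'n) measure \<Rightarrow> (real^'n) set \<Rightarrow> (real^'n \<Rightarrow> real) \<Rightarrow> bool" where
  "eta_adm \<mu> B' \<eta> \<longleftrightarrow> (\<exists>c r. r > 0 \<and> B' = ball c r) \<and> emeasure \<mu> B' > 0 \<and>
     (\<forall>z. 0 \<le> \<eta> z) \<and> (\<exists>L. L-lipschitz_on UNIV \<eta>) \<and>
     compact (closure {z. \<eta> z \<noteq> 0}) \<and> closure {z. \<eta> z \<noteq> 0} \<subseteq> B' \<and>
     integral\<^sup>L \<mu> \<eta> = 1"

definition phi_adm :: "(real^'n) measure \<Rightarrow> (real^'n) set \<Rightarrow> real^'n \<Rightarrow> (real^'n) set
                        \<Rightarrow> (real^'n \<Rightarrow> real) \<Rightarrow> bool" where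
  "phi_adm \<mu> B' x B \<phi> \<longleftrightarrow> (\<exists>c r. r > 0 \<and> B = ball c r \<and> (\<forall>y\<in>ball c (2 * r). \<phi> y = 1)) \<and>
     x \<in> B \<and> B' \<subseteq> B \<and> \<phi> \<in> borel_measurable borel \<and>
     compact (closure {y. \<phi> y \<noteq> 0}) \<and> (\<forall>y. 0 \<le> \<phi> y \<and> \<phi> y \<le> 1) \<and>
     integrable \<mu> (\<lambda>y. (\<phi> y)\<^sup>2)"

text \<open>\<integral> eta T_mu(phi) d mu = <T_mu phi, eta>_mu = lim_{delta \<rightarrow> 0} <T_{mu,delta} phi, eta>_mu.\<close>
definition TmuPair :: "(real^'n \<Rightarrow> complex^'m) \<Rightarrow> real \<Rightarrow> (real^'n) measure
                         \<Rightarrow> (real^'n \<Rightarrow> real) \<Rightarrow> (real^'n \<Rightarrow> real) \<Rightarrow> complex^'m" where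
  "TmuPair \<Omega> s \<mu> \<phi> \<eta> = Lim (at_right 0)
     (\<lambda>\<delta>. integral\<^sup>L \<mu> (\<lambda>z. \<eta> z *\<^sub>R Tdelta \<Omega> s \<mu> \<delta> (\<lambda>y. complex_of_real (\<phi> y)) z))"

definition Ttilde :: "(real^'n \<Rightarrow> complex^'m) \<Rightarrow> real \<Rightarrow> (real^'n) measure \<Rightarrow> (real^'n \<Rightarrow> real)
                        \<Rightarrow> real \<Rightarrow> (real^'n \<Rightarrow> real) \<Rightarrow> real^'n \<Rightarrow> complex^'m" where
  "Ttilde \<Omega> s \<mu> \<eta> \<delta> \<phi> x =
     Tdelta \<Omega> s \<mu> \<delta> (\<lambda>y. complex_of_real (\<phi> y)) x - TmuPair \<Omega> s \<mu> \<phi> \<eta>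
     + integral\<^sup>L \<mu> (\<lambda>y. (1 - \<phi> y) *\<^sub>R
          integral\<^sup>L \<mu> (\<lambda>z. \<eta> z *\<^sub>R (Kd \<Omega> s \<delta> (x - y) - Ker \<Omega> s (z - y))))"

end

theory Submission
  imports Defs
begin

text \<open>
  With \<open>Q(y) = \<integral> \<eta>(z) K(z - y) d\<mu>(z)\<close>, the \<open>\<eta>\<close>-average of the kernel, one has
  \<open>Ttilde\<^sub>\<delta>(x) = \<integral> K\<^sub>\<delta>(x - y) - (1 - \<phi>(y)) Q(y) d\<mu>(y) - \<langle>T\<^sub>\<mu> \<phi>, \<eta>\<rangle>\<close>.
  Two admissible cut-offs differ only away from \<open>supp \<eta>\<close>, where the truncation is inactive, so by
  Fubini the pairings differ by exactly \<open>\<integral> (\<phi>\<^sub>1 - \<phi>\<^sub>2) Q d\<mu>\<close>; hence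
  \<open>Ttilde\<^sub>\<delta>(x) - Ttilde\<^sub>\<delta>(x') = \<integral> K\<^sub>\<delta>(x - y) - K\<^sub>\<delta>(x' - y) d\<mu>(y)\<close>. This integral is bounded by the Hoelder
  estimate \<open>|K\<^sub>\<delta>(u) - K\<^sub>\<delta>(v)| \<lesssim> |u - v|^\<alpha> max(\<delta>, |u|)^(-s-\<alpha>)\<close> for \<open>|u - v| \<le> max(\<delta>, |u|)/2\<close> and the
  trivial bound \<open>max(\<delta>, |u|)^(-s)\<close> near \<open>x, x'\<close>, integrated over dyadic annuli using
  \<open>\<mu>(B(x, r)) \<le> \<Lambda> r^s\<close>. The pairing \<open>\<langle>T\<^sub>\<mu> \<phi>, \<eta>\<rangle>\<close> exists because, after antisymmetrisation, the
  Lipschitz weight \<open>\<eta>(z)\<phi>(y) - \<eta>(y)\<phi>(z)\<close> makes the kernel absolutely integrable, so dominated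
  convergence applies as \<open>\<delta> \<rightarrow> 0\<close>.
\<close>

lemma powr_neg_diff_le:
  fixes a b p :: real
  assumes a: "0 < a" and ab: "a \<le> b" and p: "0 < p"
  shows "a powr (-p) - b powr (-p) \<le> p * a powr (-p-1) * (b - a)"
proof (cases "a = b")
  case False
  then have ab': "a < b" using ab by simp
  have "\<And>x. a \<le> x \<Longrightarrow> x \<le> b \<Longrightarrow> ((\<lambda>z. z powr (-p)) has_real_derivative (-p) * x powr (-p - 1)) (at x)"
    using a by (intro has_real_derivative_powr) auto
  from MVT2[OF ab' this] obtain z
    where z: "a < z" "z < b" "b powr (-p) - a powr (-p) = (b - a) * ((-p) * z powr (-p - 1))"
    by blast
  have "z powr (-p-1) \<le> a powr (-p-1)" using z a p by (intro powr_mono2') auto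
  then have "(b - a) * (p * z powr (-p-1)) \<le> (b - a) * (p * a powr (-p-1))"
    using ab p by (intro mult_left_mono) auto
  then show ?thesis using z(3) by (simp add: algebra_simps)
qed simp

lemma abs_powr_neg_diff_le:
  fixes a b p :: real
  assumes a: "0 < a" and b: "0 < b" and p: "0 < p"
  shows "\<bar>a powr (-p) - b powr (-p)\<bar> \<le> p * min a b powr (-p-1) * \<bar>a - b\<bar>"
proof (cases "a \<le> b")
  case True
  have "b powr (-p) \<le> a powr (-p)" using a True p by (intro powr_mono2') auto
  then show ?thesis using powr_neg_diff_le[OF a True p] True by (simp add: min_def)
next
  case False
  have "a powr (-p) \<le> b powr (-p)" using b False p by (intro powr_mono2') auto
  then show ?thesis using powr_neg_diff_le[OF b _ p, of a] False by (simp add: min_def)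
qed

lemma le_powr_mult_powr:
  fixes a M \<alpha> :: real
  assumes "0 \<le> a" "a \<le> M" "\<alpha> \<le> 1"
  shows "a \<le> a powr \<alpha> * M powr (1 - \<alpha>)"
proof (cases "a = 0")
  case False
  then have "a = a powr \<alpha> * a powr (1 - \<alpha>)" using assms by (simp add: powr_add[symmetric])
  also have "\<dots> \<le> a powr \<alpha> * M powr (1 - \<alpha>)" using assms by (intro mult_left_mono powr_mono2) auto
  finally show ?thesis .
qed simp

lemma le_two_mult_powr_mult_powr:
  fixes t M \<alpha> :: real
  assumes "0 \<le> t" "t \<le> 2 * M" "0 \<le> \<alpha>" "\<alpha> \<le> 1"
  shows "t \<le> 2 * t powr \<alpha> * M powr (1 - \<alpha>)"
proof -
  have "t \<le> t powr \<alpha> * (2 * M) powr (1 - \<alpha>)" using assms by (intro le_powr_mult_powr) auto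
  also have "\<dots> = t powr \<alpha> * (2 powr (1 - \<alpha>) * M powr (1 - \<alpha>))"
    using assms by (simp add: powr_mult)
  also have "\<dots> \<le> t powr \<alpha> * (2 * M powr (1 - \<alpha>))"
    using powr_mono[of "1 - \<alpha>" 1 "2::real"] assms by (intro mult_left_mono mult_right_mono) auto
  finally show ?thesis by (simp add: mult_ac)
qed

lemma two_powr_le_two: "e \<le> 1 \<Longrightarrow> (2::real) powr e \<le> 2"
  using powr_mono[of e 1 "2::real"] by simp

lemma two_powr_less_one: "e < 0 \<Longrightarrow> (2::real) powr e < 1"
  using powr_less_mono[of e 0 "2::real"] by simp

lemma abs_powr_neg_diff_le_half:
  fixes R R' p :: real
  assumes R: "0 < R" and R': "R / 2 \<le> R'" and p: "0 < p"
  shows "\<bar>R powr (-p) - R' powr (-p)\<bar> \<le> p * 2 powr (p + 1) * R powr (-p-1) * \<bar>R - R'\<bar>"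
proof -
  have "\<bar>R powr (-p) - R' powr (-p)\<bar> \<le> p * min R R' powr (-p-1) * \<bar>R - R'\<bar>"
    using abs_powr_neg_diff_le[OF R _ p, of R'] R R' by simp
  also have "min R R' powr (-p-1) \<le> (R / 2) powr (-p-1)"
    using R R' p by (intro powr_mono2') (auto simp: min_def)
  also have "(R / 2) powr (-p-1) = 2 powr (p + 1) * R powr (-p-1)"
    using R by (simp add: powr_divide divide_simps) (simp flip: powr_add)
  finally show ?thesis using p by (simp add: mult_right_mono mult_left_mono)
qed

lemma abs_powr_neg_diff_mult_le:
  fixes R R' t p \<alpha> :: real
  assumes R: "0 < R" and R': "R / 2 \<le> R'" and dR: "\<bar>R - R'\<bar> \<le> t" and tR: "t \<le> R"
    and p: "0 < p" and \<alpha>: "\<alpha> \<le> 1"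
  shows "\<bar>R powr (-p) - R' powr (-p)\<bar> * (2 * R) \<le> p * 2 powr (p + 2) * t powr \<alpha> * R powr (1 - p - \<alpha>)"
proof -
  have t: "0 \<le> t" using dR by linarith
  have "\<bar>R powr (-p) - R' powr (-p)\<bar> * (2 * R) \<le> (p * 2 powr (p + 1) * R powr (-p-1) * t) * (2 * R)"
    using abs_powr_neg_diff_le_half[OF R R' p] dR R p
    by (intro mult_right_mono) (auto intro: order_trans mult_left_mono)
  also have "\<dots> = p * 2 powr (p + 2) * R powr (-p) * t"
  proof -
    have e1: "2 * 2 powr (p + 1) = (2::real) powr (p + 2)" by (simp add: powr_add)
    have e2: "R powr (-p-1) * R = R powr (-p)" using R powr_add[of R "-p-1" 1] by simp
    show ?thesis unfolding e1[symmetric] e2[symmetric] by (simp add: mult_ac)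
  qed
  also have "\<dots> \<le> p * 2 powr (p + 2) * R powr (-p) * (t powr \<alpha> * R powr (1 - \<alpha>))"
    using le_powr_mult_powr[OF t tR \<alpha>] p by (intro mult_left_mono) auto
  also have "\<dots> = p * 2 powr (p + 2) * t powr \<alpha> * R powr (1 - p - \<alpha>)"
  proof -
    have "R powr (-p) * R powr (1 - \<alpha>) = R powr (1 - p - \<alpha>)" by (simp add: algebra_simps flip: powr_add)
    then show ?thesis by (simp add: mult_ac)
  qed
  finally show ?thesis .
qed

lemma powr_le_one_plus: "0 \<le> q \<Longrightarrow> 0 \<le> e \<Longrightarrow> e \<le> 1 \<Longrightarrow> (q::real) powr e \<le> 1 + q"
proof (cases "q \<le> 1")
  case True
  assume "0 \<le> q" "0 \<le> e" "e \<le> 1"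
  then have "q powr e \<le> 1" using True by (cases "q = 0") (auto intro: powr_le1)
  then show ?thesis using \<open>0 \<le> q\<close> by simp
next
  case False
  assume "0 \<le> q" "0 \<le> e" "e \<le> 1"
  then have "q powr e \<le> q powr 1" using False by (intro powr_mono) auto
  then show ?thesis using False by simp
qed

lemma exists_dyadic_between:
  fixes q :: real assumes "1 \<le> q"
  shows "\<exists>k::nat. 2^k \<le> q \<and> q < 2^(Suc k)"
proof -
  obtain n where "q < 2^n" using real_arch_pow[of 2 q] by auto
  then obtain m where m: "q < 2^m" "\<And>i. i < m \<Longrightarrow> \<not> q < 2^i"
    using exists_least_iff[of "\<lambda>n. q < (2::real)^n"] by blast
  with assms obtain k where "m = Suc k" by (cases m) auto
  then show ?thesis using m(1) m(2)[of k] by (intro exI[of _ k]) auto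
qed

lemma exists_dyadic_between':
  fixes q :: real assumes "1 < q"
  shows "\<exists>k::nat. 2^k < q \<and> q \<le> 2^(Suc k)"
proof -
  obtain n where "q \<le> 2^n" using real_arch_pow[of 2 q] by (auto intro: less_imp_le)
  then obtain m where m: "q \<le> 2^m" "\<And>i. i < m \<Longrightarrow> \<not> q \<le> 2^i"
    using exists_least_iff[of "\<lambda>n. q \<le> (2::real)^n"] by blast
  with assms obtain k where "m = Suc k" by (cases m) auto
  then show ?thesis using m(1) m(2)[of k] by (intro exI[of _ k]) auto
qed

lemma ennreal_suminf_geometric:
  fixes a q :: real
  assumes "0 \<le> a" "0 \<le> q" "q < 1"
  shows "(\<Sum>k. ennreal (a * q ^ k)) = ennreal (a / (1 - q))"
proof -
  have "(\<lambda>k. a * q ^ k) sums (a * (1 / (1 - q)))"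
    using assms by (intro sums_mult geometric_sums) auto
  then show ?thesis using assms by (subst suminf_ennreal2) (auto simp: sums_iff)
qed

lemma norm_sgn_diff_le:
  fixes u v :: "'a::real_normed_vector"
  assumes u: "u \<noteq> 0" and v: "v \<noteq> 0" and le: "norm v \<le> norm u"
  shows "norm (sgn u - sgn v) \<le> 2 * norm (u - v) / norm u"
proof -
  have nu: "norm u > 0" and nv: "norm v > 0" using u v by simp_all
  have "(1/norm u) *\<^sub>R v = (1/norm v) *\<^sub>R v + ((norm v - norm u) / norm u * (1 / norm v)) *\<^sub>R v"
    using nu nv by (simp add: field_simps flip: scaleR_add_left)
  then have "sgn u - sgn v = (1/norm u) *\<^sub>R (u - v) + ((norm v - norm u) / norm u) *\<^sub>R sgn v"
    by (simp add: sgn_div_norm divide_inverse algebra_simps)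
  then have "norm (sgn u - sgn v) \<le> norm (u - v) / norm u + \<bar>norm v - norm u\<bar> / norm u"
    using norm_triangle_ineq[of "(1/norm u) *\<^sub>R (u - v)" "((norm v - norm u) / norm u) *\<^sub>R sgn v"] v
    by (simp add: norm_sgn)
  moreover have "\<bar>norm v - norm u\<bar> / norm u \<le> norm (u - v) / norm u"
    using norm_triangle_ineq3[of v u] nu by (intro divide_right_mono) (auto simp: norm_minus_commute)
  ultimately show ?thesis by simp
qed

definition C_holder :: "real \<Rightarrow> real" where
  "C_holder s = 8 + (s + 1) * 2 powr (s + 3)"

lemma C_holder_pos: "0 < s \<Longrightarrow> 0 < C_holder s"
  unfolding C_holder_def by (simp add: add_pos_nonneg)

locale holder_kernel =
  fixes \<Omega> :: "real^'n \<Rightarrow> complex^'m" and s \<alpha> :: real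
  assumes adm: "omega_adm \<alpha> \<Omega>" and s_pos: "0 < s" and \<alpha>_pos: "0 < \<alpha>" and \<alpha>_le_1: "\<alpha> \<le> 1"
begin

lemma Omega_scaleR: "\<Omega> (c *\<^sub>R x) = c *\<^sub>R \<Omega> x"
  using adm unfolding omega_adm_def by blast

lemma Omega_zero [simp]: "\<Omega> 0 = 0"
  using Omega_scaleR[of 0 0] by simp

lemma Omega_minus: "\<Omega> (- x) = - \<Omega> x"
  using adm unfolding omega_adm_def by blast

lemma norm_Omega_sphere_le: "norm x = 1 \<Longrightarrow> norm (\<Omega> x) \<le> 1"
  using adm unfolding omega_adm_def by blast

lemma Omega_sphere_holder:
  "norm x = 1 \<Longrightarrow> norm y = 1 \<Longrightarrow> norm (\<Omega> x - \<Omega> y) \<le> norm (x - y) powr \<alpha>"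
  using adm unfolding omega_adm_def by blast

lemma Omega_polar: "\<Omega> u = norm u *\<^sub>R \<Omega> (sgn u)"
proof (cases "u = 0")
  case False
  then have "u = norm u *\<^sub>R sgn u" by (simp add: sgn_div_norm)
  then show ?thesis by (metis Omega_scaleR)
qed simp

lemma norm_Omega_le: "norm (\<Omega> u) \<le> norm u"
proof (cases "u = 0")
  case False
  have "norm (\<Omega> u) = norm u * norm (\<Omega> (sgn u))" by (subst Omega_polar) simp
  also have "\<dots> \<le> norm u" using norm_Omega_sphere_le[of "sgn u"] False
    by (simp add: norm_sgn mult_left_le)
  finally show ?thesis .
qed simp

lemma norm_Omega_diff_le_sphere:
  assumes "u \<noteq> 0" "v \<noteq> 0"
  shows "norm (\<Omega> u - \<Omega> v) \<le> norm u * norm (sgn u - sgn v) powr \<alpha> + norm (u - v)"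
proof -
  have "\<Omega> u - \<Omega> v = norm u *\<^sub>R (\<Omega> (sgn u) - \<Omega> (sgn v)) + (norm u - norm v) *\<^sub>R \<Omega> (sgn v)"
    by (subst (1 2) Omega_polar) (simp add: algebra_simps)
  then have "norm (\<Omega> u - \<Omega> v)
      \<le> norm (norm u *\<^sub>R (\<Omega> (sgn u) - \<Omega> (sgn v))) + norm ((norm u - norm v) *\<^sub>R \<Omega> (sgn v))"
    by (simp only: norm_triangle_ineq)
  also have "\<dots> = norm u * norm (\<Omega> (sgn u) - \<Omega> (sgn v)) + \<bar>norm u - norm v\<bar> * norm (\<Omega> (sgn v))"
    by simp
  also have "\<dots> \<le> norm u * norm (sgn u - sgn v) powr \<alpha> + norm (u - v) * 1"
    using assms Omega_sphere_holder[of "sgn u" "sgn v"] norm_Omega_sphere_le[of "sgn v"]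
      norm_triangle_ineq3[of u v]
    by (intro add_mono mult_mono mult_left_mono) (auto simp: norm_sgn)
  finally show ?thesis by simp
qed

lemma Omega_holder_ordered:
  assumes le: "norm v \<le> norm u" and uM: "norm u \<le> M"
  shows "norm (\<Omega> u - \<Omega> v) \<le> 4 * norm (u - v) powr \<alpha> * M powr (1 - \<alpha>)"
proof -
  have uvM: "norm (u - v) \<le> 2 * M" using le uM norm_triangle_ineq4[of u v] by linarith
  show ?thesis
  proof (cases "v = 0")
    case True
    have "norm u \<le> norm u powr \<alpha> * M powr (1 - \<alpha>)"
      using uM \<alpha>_le_1 by (intro le_powr_mult_powr) auto
    also have "\<dots> \<le> 4 * norm u powr \<alpha> * M powr (1 - \<alpha>)" by simp
    finally show ?thesis using True norm_Omega_le[of u] by simp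
  next
    case False
    then have u: "u \<noteq> 0" and nu: "0 < norm u" using le by auto
    have "norm u * norm (sgn u - sgn v) powr \<alpha> \<le> norm u * (2 * norm (u - v) / norm u) powr \<alpha>"
      using norm_sgn_diff_le[OF u False le] \<alpha>_pos by (intro mult_left_mono powr_mono2) auto
    also have "\<dots> = 2 powr \<alpha> * norm (u - v) powr \<alpha> * norm u powr (1 - \<alpha>)"
      using nu by (simp add: powr_divide powr_mult powr_diff)
    also have "\<dots> \<le> 2 * norm (u - v) powr \<alpha> * M powr (1 - \<alpha>)"
      using two_powr_le_two[OF \<alpha>_le_1] uM \<alpha>_pos \<alpha>_le_1 by (intro mult_mono powr_mono2) auto
    finally have "norm u * norm (sgn u - sgn v) powr \<alpha> \<le> 2 * norm (u - v) powr \<alpha> * M powr (1 - \<alpha>)" .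
    moreover have "norm (u - v) \<le> 2 * norm (u - v) powr \<alpha> * M powr (1 - \<alpha>)"
      using le_two_mult_powr_mult_powr[OF _ uvM] \<alpha>_pos \<alpha>_le_1 by simp
    ultimately show ?thesis using norm_Omega_diff_le_sphere[OF u False] by linarith
  qed
qed

lemma Omega_holder:
  assumes "norm u \<le> M" "norm v \<le> M"
  shows "norm (\<Omega> u - \<Omega> v) \<le> 4 * norm (u - v) powr \<alpha> * M powr (1 - \<alpha>)"
proof (cases "norm v \<le> norm u")
  case False
  then show ?thesis using Omega_holder_ordered[of u v M] assms by (simp add: norm_minus_commute)
qed (use Omega_holder_ordered assms in blast)

lemma Kd_eq_powr: "Kd \<Omega> s \<delta> u = (max \<delta> (norm u) powr (-(s+1))) *\<^sub>R \<Omega> u"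
  unfolding Kd_def by (simp only: powr_minus_divide)

lemma Ker_eq_powr: "Ker \<Omega> s u = (norm u powr (-(s+1))) *\<^sub>R \<Omega> u"
  unfolding Ker_def by (simp only: powr_minus_divide)

lemma norm_Kd_le:
  assumes "0 < \<delta>"
  shows "norm (Kd \<Omega> s \<delta> u) \<le> max \<delta> (norm u) powr (-s)"
proof -
  let ?R = "max \<delta> (norm u)"
  have "norm (Kd \<Omega> s \<delta> u) = ?R powr (-(s+1)) * norm (\<Omega> u)" by (simp add: Kd_eq_powr)
  also have "\<dots> \<le> ?R powr (-(s+1)) * ?R" using norm_Omega_le[of u] by (intro mult_left_mono) auto
  also have "\<dots> = ?R powr (-s)" using assms by (simp add: powr_mult_base mult.commute)
  finally show ?thesis .
qed

lemma norm_Ker_le: "norm (Ker \<Omega> s u) \<le> norm u powr (-s)"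
proof (cases "u = 0")
  case False
  have "norm (Ker \<Omega> s u) = norm u powr (-(s+1)) * norm (\<Omega> u)" by (simp add: Ker_eq_powr)
  also have "\<dots> \<le> norm u powr (-(s+1)) * norm u" using norm_Omega_le[of u] by (intro mult_left_mono) auto
  also have "\<dots> = norm u powr (-s)" using False by (simp add: powr_mult_base mult.commute)
  finally show ?thesis .
qed (simp add: Ker_def)

lemma norm_Kd_le_delta: "0 < \<delta> \<Longrightarrow> norm (Kd \<Omega> s \<delta> u) \<le> \<delta> powr (-s)"
  using norm_Kd_le[of \<delta> u] powr_mono2'[of "-s" \<delta> "max \<delta> (norm u)"] s_pos by simp

lemma norm_Ker_le_radius: "0 < r \<Longrightarrow> r \<le> norm u \<Longrightarrow> norm (Ker \<Omega> s u) \<le> r powr (-s)"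
  using norm_Ker_le[of u] powr_mono2'[of "-s" r "norm u"] s_pos by simp

lemma Kd_eq_Ker: "\<delta> \<le> norm u \<Longrightarrow> Kd \<Omega> s \<delta> u = Ker \<Omega> s u"
  unfolding Kd_def Ker_def by (simp add: max_def)

lemma Kd_zero [simp]: "Kd \<Omega> s \<delta> 0 = 0"
  unfolding Kd_def by simp

lemma Kd_minus: "Kd \<Omega> s \<delta> (- u) = - Kd \<Omega> s \<delta> u"
  unfolding Kd_def by (simp add: Omega_minus)

lemma Kd_holder:
  assumes d: "0 < \<delta>" and t: "norm (u - v) \<le> max \<delta> (norm u) / 2"
  shows "norm (Kd \<Omega> s \<delta> u - Kd \<Omega> s \<delta> v)
    \<le> C_holder s * norm (u - v) powr \<alpha> * max \<delta> (norm u) powr (-s-\<alpha>)"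
proof -
  define R where "R = max \<delta> (norm u)"
  define R' where "R' = max \<delta> (norm v)"
  define t where "t = norm (u - v)"
  have R: "0 < R" using d by (simp add: R_def)
  have tR: "t \<le> R / 2" using t by (simp add: R_def t_def)
  have tri: "norm u - t \<le> norm v" "norm v \<le> norm u + t"
    using norm_triangle_ineq2[of u v] norm_triangle_ineq2[of v u]
    by (auto simp: t_def norm_minus_commute)
  have RR': "R / 2 \<le> R'" and dR: "\<bar>R - R'\<bar> \<le> t" and vR: "norm v \<le> 2 * R"
    using tri tR d by (auto simp: R_def R'_def max_def)
  have uR: "norm u \<le> 2 * R" using R by (simp add: R_def)
  have "Kd \<Omega> s \<delta> u - Kd \<Omega> s \<delta> v
      = R powr (-(s+1)) *\<^sub>R (\<Omega> u - \<Omega> v) + (R powr (-(s+1)) - R' powr (-(s+1))) *\<^sub>R \<Omega> v"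
    by (simp add: Kd_eq_powr R_def R'_def algebra_simps)
  then have "norm (Kd \<Omega> s \<delta> u - Kd \<Omega> s \<delta> v)
      \<le> norm (R powr (-(s+1)) *\<^sub>R (\<Omega> u - \<Omega> v)) + norm ((R powr (-(s+1)) - R' powr (-(s+1))) *\<^sub>R \<Omega> v)"
    by (simp only: norm_triangle_ineq)
  also have "\<dots> = R powr (-(s+1)) * norm (\<Omega> u - \<Omega> v) + \<bar>R powr (-(s+1)) - R' powr (-(s+1))\<bar> * norm (\<Omega> v)"
    by simp
  also have "\<dots> \<le> R powr (-(s+1)) * (8 * t powr \<alpha> * R powr (1 - \<alpha>))
      + (s+1) * 2 powr (s+1+2) * t powr \<alpha> * R powr (1 - (s+1) - \<alpha>)"
  proof (intro add_mono mult_left_mono)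
    have "norm (\<Omega> u - \<Omega> v) \<le> 4 * t powr \<alpha> * (2 * R) powr (1 - \<alpha>)"
      using Omega_holder[OF uR vR] by (simp add: t_def)
    also have "\<dots> = 4 * t powr \<alpha> * (2 powr (1 - \<alpha>) * R powr (1 - \<alpha>))"
      using R by (simp add: powr_mult)
    also have "\<dots> \<le> 4 * t powr \<alpha> * (2 * R powr (1 - \<alpha>))"
      using two_powr_le_two[of "1 - \<alpha>"] \<alpha>_pos by (intro mult_left_mono mult_right_mono) auto
    finally show "norm (\<Omega> u - \<Omega> v) \<le> 8 * t powr \<alpha> * R powr (1 - \<alpha>)" by simp
    have "\<bar>R powr (-(s+1)) - R' powr (-(s+1))\<bar> * norm (\<Omega> v) \<le> \<bar>R powr (-(s+1)) - R' powr (-(s+1))\<bar> * (2 * R)"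
      using vR norm_Omega_le[of v] by (intro mult_left_mono) auto
    also have "\<dots> \<le> (s+1) * 2 powr (s+1+2) * t powr \<alpha> * R powr (1 - (s+1) - \<alpha>)"
      using tR R s_pos \<alpha>_le_1 by (intro abs_powr_neg_diff_mult_le RR' dR) auto
    finally show "\<bar>R powr (-(s+1)) - R' powr (-(s+1))\<bar> * norm (\<Omega> v)
      \<le> (s+1) * 2 powr (s+1+2) * t powr \<alpha> * R powr (1 - (s+1) - \<alpha>)" .
  qed simp
  also have "\<dots> = C_holder s * t powr \<alpha> * R powr (-s-\<alpha>)"
  proof -
    have "R powr (-(s+1)) * R powr (1 - \<alpha>) = R powr (-s-\<alpha>)" by (simp flip: powr_add)
    then show ?thesis by (simp add: C_holder_def algebra_simps)
  qed
  finally show ?thesis by (simp add: R_def t_def)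
qed

lemma continuous_on_Omega: "continuous_on UNIV \<Omega>"
  unfolding continuous_on_def
proof (intro ballI)
  fix u :: "real^'n"
  define M where "M = norm u + 1"
  have "\<forall>\<^sub>F v in at u. norm (\<Omega> v - \<Omega> u) \<le> 4 * norm (v - u) powr \<alpha> * M powr (1 - \<alpha>)"
    unfolding eventually_at
  proof (intro exI[of _ 1] conjI ballI impI)
    fix v assume "v \<noteq> u \<and> dist v u < 1"
    then have "norm v \<le> M" using norm_triangle_ineq2[of v u] by (auto simp: M_def dist_norm)
    then show "norm (\<Omega> v - \<Omega> u) \<le> 4 * norm (v - u) powr \<alpha> * M powr (1 - \<alpha>)"
      using Omega_holder[of v M u] by (simp add: M_def)
  qed simp
  moreover have "((\<lambda>v. 4 * norm (v - u) powr \<alpha> * M powr (1 - \<alpha>)) \<longlongrightarrow> 0) (at u)"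
    using \<alpha>_pos by (intro tendsto_eq_intros tendsto_zero_powrI) auto
  ultimately have "((\<lambda>v. \<Omega> v - \<Omega> u) \<longlongrightarrow> 0) (at u)" by (rule Lim_null_comparison)
  then show "(\<Omega> \<longlongrightarrow> \<Omega> u) (at u within UNIV)" by (simp add: LIM_zero_cancel)
qed

lemma Omega_measurable [measurable]: "\<Omega> \<in> borel_measurable borel"
  by (rule borel_measurable_continuous_onI[OF continuous_on_Omega])

lemma Kd_measurable [measurable]: "Kd \<Omega> s \<delta> \<in> borel_measurable borel"
  unfolding Kd_def by measurable

lemma Ker_measurable [measurable]: "Ker \<Omega> s \<in> borel_measurable borel"
  unfolding Ker_def by measurable

end

lemma ball_in_borel [measurable]: "ball x r \<in> sets borel"
  by (simp add: borel_open)

lemma compl_ball_in_borel [measurable]: "- ball x r \<in> sets borel"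
  by (intro borel_comp ball_in_borel)

lemma nn_integral_le_lincomb3:
  fixes f ga gb gc :: "'a \<Rightarrow> real"
  assumes [measurable]: "ga \<in> borel_measurable M" "gb \<in> borel_measurable M" "gc \<in> borel_measurable M"
    and g: "\<And>y. 0 \<le> ga y" "\<And>y. 0 \<le> gb y" "\<And>y. 0 \<le> gc y"
    and abc: "0 \<le> a" "0 \<le> b" "0 \<le> c"
    and f: "\<And>y. f y \<le> a * ga y + b * gb y + c * gc y"
    and I: "(\<integral>\<^sup>+y. ga y \<partial>M) \<le> ennreal A1" "(\<integral>\<^sup>+y. gb y \<partial>M) \<le> ennreal A2"
      "(\<integral>\<^sup>+y. gc y \<partial>M) \<le> ennreal A3"
    and A: "0 \<le> A1" "0 \<le> A2" "0 \<le> A3"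
  shows "(\<integral>\<^sup>+y. f y \<partial>M) \<le> ennreal (a * A1 + b * A2 + c * A3)"
proof -
  have "(\<integral>\<^sup>+y. f y \<partial>M) \<le> (\<integral>\<^sup>+y. a * ennreal (ga y) + b * ennreal (gb y) + c * ennreal (gc y) \<partial>M)"
  proof (intro nn_integral_mono)
    fix y
    have "ennreal (f y) \<le> ennreal (a * ga y + b * gb y + c * gc y)" using f by (intro ennreal_leI)
    also have "\<dots> = a * ennreal (ga y) + b * ennreal (gb y) + c * ennreal (gc y)"
      using g abc by (simp add: ennreal_plus[symmetric] ennreal_mult[symmetric] del: ennreal_plus)
    finally show "ennreal (f y) \<le> a * ennreal (ga y) + b * ennreal (gb y) + c * ennreal (gc y)" .
  qed
  also have "\<dots> = a * (\<integral>\<^sup>+y. ga y \<partial>M) + b * (\<integral>\<^sup>+y. gb y \<partial>M) + c * (\<integral>\<^sup>+y. gc y \<partial>M)"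
    by (simp add: nn_integral_add nn_integral_cmult)
  also have "\<dots> \<le> a * ennreal A1 + b * ennreal A2 + c * ennreal A3"
    using I by (intro add_mono mult_left_mono) auto
  also have "\<dots> = ennreal (a * A1 + b * A2 + c * A3)"
    using A abc by (simp add: ennreal_plus[symmetric] ennreal_mult[symmetric] del: ennreal_plus)
  finally show ?thesis .
qed

lemma nn_integral_le_lincomb2:
  fixes f ga gb :: "'a \<Rightarrow> real"
  assumes "ga \<in> borel_measurable M" "gb \<in> borel_measurable M"
    and "\<And>y. 0 \<le> ga y" "\<And>y. 0 \<le> gb y" "0 \<le> a" "0 \<le> b"
    and "\<And>y. f y \<le> a * ga y + b * gb y"
    and "(\<integral>\<^sup>+y. ga y \<partial>M) \<le> ennreal A1" "(\<integral>\<^sup>+y. gb y \<partial>M) \<le> ennreal A2" "0 \<le> A1" "0 \<le> A2"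
  shows "(\<integral>\<^sup>+y. f y \<partial>M) \<le> ennreal (a * A1 + b * A2)"
proof -
  have "(\<integral>\<^sup>+y. f y \<partial>M) \<le> ennreal (a * A1 + b * A2 + 0 * 0)"
    by (rule nn_integral_le_lincomb3[where gc = "\<lambda>_. 0"]) (use assms in auto)
  then show ?thesis by simp
qed

definition C_tail :: "real \<Rightarrow> real \<Rightarrow> real \<Rightarrow> real" where
  "C_tail \<Lambda> s p = \<Lambda> * 2 powr s / (1 - 2 powr (s - p))"

definition C_inner :: "real \<Rightarrow> real \<Rightarrow> real \<Rightarrow> real" where
  "C_inner \<Lambda> s p = \<Lambda> * 2 powr p / (1 - 2 powr (p - s))"

lemma C_tail_pos: "0 < \<Lambda> \<Longrightarrow> s < p \<Longrightarrow> 0 < C_tail \<Lambda> s p"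
  unfolding C_tail_def using two_powr_less_one[of "s - p"] by (intro divide_pos_pos mult_pos_pos) auto

lemma C_inner_pos: "0 < \<Lambda> \<Longrightarrow> p < s \<Longrightarrow> 0 < C_inner \<Lambda> s p"
  unfolding C_inner_def using two_powr_less_one[of "p - s"] by (intro divide_pos_pos mult_pos_pos) auto

lemma power_powr: "0 < x \<Longrightarrow> (x ^ k) powr a = (x powr a) ^ k" for x :: real
  by (simp add: powr_realpow[symmetric] powr_powr powr_power mult.commute)

locale growth_measure =
  fixes \<mu> :: "(real^'n) measure" and s \<Lambda> :: real
  assumes sets_\<mu>: "sets \<mu> = sets borel"
    and emeasure_ball_le: "\<And>x r. 0 < r \<Longrightarrow> emeasure \<mu> (ball x r) \<le> ennreal (\<Lambda> * r powr s)"
    and s_pos: "0 < s" and \<Lambda>_pos: "0 < \<Lambda>"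
begin

lemma sets_\<mu>_cong [measurable_cong]: "sets \<mu> = sets borel"
  by (rule sets_\<mu>)

lemma space_\<mu> [simp]: "space \<mu> = UNIV"
  using sets_eq_imp_space_eq[OF sets_\<mu>] by simp

lemma emeasure_ball_finite: "emeasure \<mu> (ball x r) < \<infinity>"
proof (cases "r > 0")
  case True then show ?thesis using emeasure_ball_le[OF True, of x] by (simp add: le_less_trans)
qed (simp add: ball_eq_empty[THEN iffD2])

lemma emeasure_bounded_finite: "bounded A \<Longrightarrow> A \<in> sets borel \<Longrightarrow> emeasure \<mu> A < \<infinity>"
proof -
  assume "bounded A" "A \<in> sets borel"
  moreover obtain r where "A \<subseteq> ball 0 r" using \<open>bounded A\<close> bounded_subset_ballD by blast
  ultimately have "emeasure \<mu> A \<le> emeasure \<mu> (ball 0 r)" by (intro emeasure_mono) (auto simp: sets_\<mu>)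
  then show ?thesis using emeasure_ball_finite le_less_trans by blast
qed

lemma emeasure_compact_finite: "compact K \<Longrightarrow> emeasure \<mu> K < \<infinity>"
  by (intro emeasure_bounded_finite compact_imp_bounded) (simp_all add: compact_imp_closed borel_closed)

sublocale sigma_finite: sigma_finite_measure \<mu>
proof
  show "\<exists>A. countable A \<and> A \<subseteq> sets \<mu> \<and> \<Union> A = space \<mu> \<and> (\<forall>a\<in>A. emeasure \<mu> a \<noteq> \<infinity>)"
  proof (intro exI[of _ "range (\<lambda>n::nat. ball (0::real^'n) (real n))"] conjI)
    show "\<Union> (range (\<lambda>n::nat. ball (0::real^'n) (real n))) = space \<mu>"
      by (auto simp: dist_norm intro: reals_Archimedean2)
  qed (use emeasure_ball_finite in \<open>auto simp: sets_\<mu> less_top\<close>)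
qed

sublocale pair: pair_sigma_finite \<mu> \<mu> ..

lemma integrable_bounded_compact_support:
  fixes f :: "real^'n \<Rightarrow> 'b::{banach, second_countable_topology}"
  assumes [measurable]: "f \<in> borel_measurable borel" and K: "compact K"
    and "\<And>y. f y \<noteq> 0 \<Longrightarrow> y \<in> K" and "\<And>y. norm (f y) \<le> b"
  shows "integrable \<mu> f"
proof (rule integrableI_bounded_set[where A=K and B=b])
  show "K \<in> sets \<mu>" using K by (simp add: sets_\<mu> compact_imp_closed borel_closed)
qed (use assms emeasure_compact_finite in auto)

lemma nn_integral_indicator_ball_le:
  "0 < r \<Longrightarrow> (\<integral>\<^sup>+y. ennreal (indicator (ball x r) y) \<partial>\<mu>) \<le> ennreal (\<Lambda> * r powr s)"
  using emeasure_ball_le[of r x] by (simp add: sets_\<mu> ennreal_indicator)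

lemma nn_integral_dyadic_le:
  fixes c r :: "nat \<Rightarrow> real" and f :: "real^'n \<Rightarrow> ennreal"
  assumes f: "\<And>y. f y = 0 \<or> (\<exists>k. f y \<le> ennreal (c k) * indicator (ball x (r k)) y)"
    and c: "\<And>k. 0 \<le> c k" and r: "\<And>k. 0 < r k"
  shows "(\<integral>\<^sup>+y. f y \<partial>\<mu>) \<le> (\<Sum>k. ennreal (c k * (\<Lambda> * r k powr s)))"
proof -
  have "(\<integral>\<^sup>+y. f y \<partial>\<mu>) \<le> (\<integral>\<^sup>+y. (\<Sum>k. ennreal (c k) * indicator (ball x (r k)) y) \<partial>\<mu>)"
  proof (intro nn_integral_mono)
    fix y
    show "f y \<le> (\<Sum>k. ennreal (c k) * indicator (ball x (r k)) y)"
    proof (cases "f y = 0")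
      case False
      with f obtain k where "f y \<le> ennreal (c k) * indicator (ball x (r k)) y" by blast
      also have "\<dots> \<le> (\<Sum>k. ennreal (c k) * indicator (ball x (r k)) y)"
        using ennreal_suminf_lessD[where f="\<lambda>k. ennreal (c k) * indicator (ball x (r k)) y" and i=k]
        by (meson not_le order_less_irrefl)
      finally show ?thesis .
    qed simp
  qed
  also have "\<dots> = (\<Sum>k. ennreal (c k) * emeasure \<mu> (ball x (r k)))"
    by (subst nn_integral_suminf) (auto intro!: suminf_cong nn_integral_cmult_indicator simp: sets_\<mu>)
  also have "\<dots> \<le> (\<Sum>k. ennreal (c k * (\<Lambda> * r k powr s)))"
    using emeasure_ball_le[OF r] c \<Lambda>_pos
    by (intro suminf_le summableI) (simp add: ennreal_mult mult_left_mono)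
  finally show ?thesis .
qed

lemma nn_integral_dist_powr_outside_ball:
  assumes \<rho>: "0 < \<rho>" and p: "s < p"
  shows "(\<integral>\<^sup>+y. indicator (- ball x \<rho>) y * dist x y powr (-p) \<partial>\<mu>) \<le> ennreal (C_tail \<Lambda> s p * \<rho> powr (s - p))"
proof -
  define c where "c k = (\<rho> * 2^k) powr (-p)" for k :: nat
  define r where "r k = \<rho> * 2^(Suc k)" for k :: nat
  have "(\<integral>\<^sup>+y. indicator (- ball x \<rho>) y * dist x y powr (-p) \<partial>\<mu>) \<le> (\<Sum>k. ennreal (c k * (\<Lambda> * r k powr s)))"
  proof (rule nn_integral_dyadic_le)
    fix y
    show "ennreal (indicator (- ball x \<rho>) y * dist x y powr (-p)) = 0 \<or>
      (\<exists>k. ennreal (indicator (- ball x \<rho>) y * dist x y powr (-p)) \<le> ennreal (c k) * indicator (ball x (r k)) y)"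
    proof (cases "\<rho> \<le> dist x y")
      case True
      then obtain k where k: "2^k \<le> dist x y / \<rho>" "dist x y / \<rho> < 2^(Suc k)"
        using exists_dyadic_between[of "dist x y / \<rho>"] \<rho> by auto
      then have "\<rho> * 2^k \<le> dist x y" "dist x y < r k" using \<rho> by (simp_all add: field_simps r_def)
      then have "dist x y powr (-p) \<le> c k" "y \<in> ball x (r k)"
        unfolding c_def using \<rho> p s_pos by (auto intro: powr_mono2')
      then show ?thesis using True by (auto simp: indicator_def intro!: exI[of _ k] ennreal_leI)
    qed (auto simp: indicator_def)
  qed (auto simp: c_def r_def \<rho>)
  also have "\<dots> = (\<Sum>k. ennreal ((\<Lambda> * 2 powr s * \<rho> powr (s - p)) * (2 powr (s - p))^k))"
  proof (intro suminf_cong arg_cong[where f=ennreal])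
    fix k :: nat
    have "c k * (\<Lambda> * r k powr s) = \<Lambda> * 2 powr s * (\<rho> powr (-p) * \<rho> powr s) * ((2 powr (-p))^k * (2 powr s)^k)"
      using \<rho> by (simp add: c_def r_def powr_mult power_powr mult_ac)
    then show "c k * (\<Lambda> * r k powr s) = (\<Lambda> * 2 powr s * \<rho> powr (s - p)) * (2 powr (s - p))^k"
      by (simp add: power_mult_distrib[symmetric] flip: powr_add)
  qed
  also have "\<dots> = ennreal (C_tail \<Lambda> s p * \<rho> powr (s - p))"
    using two_powr_less_one[of "s - p"] p \<Lambda>_pos
    by (subst ennreal_suminf_geometric) (auto simp: C_tail_def)
  finally show ?thesis .
qed

lemma nn_integral_dist_powr_ball:
  assumes \<rho>: "0 < \<rho>" and p: "0 < p" "p < s"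
  shows "(\<integral>\<^sup>+y. indicator (ball x \<rho>) y * dist x y powr (-p) \<partial>\<mu>) \<le> ennreal (C_inner \<Lambda> s p * \<rho> powr (s - p))"
proof -
  define c where "c k = (\<rho> / 2^(Suc k)) powr (-p)" for k :: nat
  define r where "r k = \<rho> / 2^k" for k :: nat
  have "(\<integral>\<^sup>+y. indicator (ball x \<rho>) y * dist x y powr (-p) \<partial>\<mu>) \<le> (\<Sum>k. ennreal (c k * (\<Lambda> * r k powr s)))"
  proof (rule nn_integral_dyadic_le)
    fix y
    show "ennreal (indicator (ball x \<rho>) y * dist x y powr (-p)) = 0 \<or>
      (\<exists>k. ennreal (indicator (ball x \<rho>) y * dist x y powr (-p)) \<le> ennreal (c k) * indicator (ball x (r k)) y)"
    proof (cases "0 < dist x y \<and> dist x y < \<rho>")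
      case True
      then obtain k where k: "2^k < \<rho> / dist x y" "\<rho> / dist x y \<le> 2^(Suc k)"
        using exists_dyadic_between'[of "\<rho> / dist x y"] by auto
      then have "\<rho> / 2^(Suc k) \<le> dist x y" "dist x y < r k" using True by (simp_all add: field_simps r_def)
      then have "dist x y powr (-p) \<le> c k" "y \<in> ball x (r k)"
        unfolding c_def using \<rho> p by (auto intro: powr_mono2')
      then show ?thesis using True by (auto simp: indicator_def intro!: exI[of _ k] ennreal_leI)
    qed (auto simp: indicator_def)
  qed (auto simp: c_def r_def \<rho>)
  also have "\<dots> = (\<Sum>k. ennreal ((\<Lambda> * 2 powr p * \<rho> powr (s - p)) * (2 powr (p - s))^k))"
  proof (intro suminf_cong arg_cong[where f=ennreal])
    fix k :: nat
    have "c k * (\<Lambda> * r k powr s) = \<Lambda> * 2 powr p * (\<rho> powr (-p) * \<rho> powr s) * ((2 powr p)^k * (2 powr (-s))^k)"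
      using \<rho> by (simp add: c_def r_def powr_divide powr_mult power_powr powr_minus_divide divide_simps mult_ac)
    then show "c k * (\<Lambda> * r k powr s) = (\<Lambda> * 2 powr p * \<rho> powr (s - p)) * (2 powr (p - s))^k"
      by (simp add: power_mult_distrib[symmetric] flip: powr_add)
  qed
  also have "\<dots> = ennreal (C_inner \<Lambda> s p * \<rho> powr (s - p))"
    using two_powr_less_one[of "p - s"] p \<Lambda>_pos
    by (subst ennreal_suminf_geometric) (auto simp: C_inner_def)
  finally show ?thesis .
qed

end

context growth_measure
begin

lemma nn_integral_max_dist_powr_ball:
  assumes d: "0 < \<delta>" and \<rho>: "0 < \<rho>" and p: "0 < p" "p < s" "s - p \<le> 1"
  shows "(\<integral>\<^sup>+y. indicator (ball z \<rho>) y * max \<delta> (dist z y) powr (-s) \<partial>\<mu>)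
    \<le> ennreal (\<Lambda> + C_inner \<Lambda> s p * (1 + \<rho> / \<delta>))"
proof -
  have "(\<integral>\<^sup>+y. indicator (ball z \<rho>) y * max \<delta> (dist z y) powr (-s) \<partial>\<mu>)
      \<le> ennreal (\<delta> powr (-s) * (\<Lambda> * \<delta> powr s) + \<delta> powr (p - s) * (C_inner \<Lambda> s p * \<rho> powr (s - p)))"
  proof (rule nn_integral_le_lincomb2)
    fix y
    show "indicator (ball z \<rho>) y * max \<delta> (dist z y) powr (-s)
      \<le> \<delta> powr (-s) * indicator (ball z \<delta>) y + \<delta> powr (p - s) * (indicator (ball z \<rho>) y * dist z y powr (-p))"
    proof (cases "dist z y < \<delta>")
      case False
      then have dd: "\<delta> \<le> dist z y" "0 < dist z y" using d by auto
      have "dist z y powr (-s) = dist z y powr (-p) * dist z y powr (p - s)" by (simp flip: powr_add)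
      also have "\<dots> \<le> dist z y powr (-p) * \<delta> powr (p - s)"
        using dd d p by (intro mult_left_mono powr_mono2') auto
      finally show ?thesis using False dd by (auto simp: indicator_def max_def mult_ac)
    qed (use d in \<open>auto simp: indicator_def max_def\<close>)
  qed (use d \<rho> p \<Lambda>_pos C_inner_pos[OF \<Lambda>_pos p(2)] in
      \<open>auto intro: nn_integral_indicator_ball_le nn_integral_dist_powr_ball\<close>)
  also have "\<delta> powr (-s) * (\<Lambda> * \<delta> powr s) = \<Lambda>" using d by (simp add: powr_minus_divide)
  also have "\<delta> powr (p - s) * (C_inner \<Lambda> s p * \<rho> powr (s - p)) = C_inner \<Lambda> s p * (\<rho> / \<delta>) powr (s - p)"
    using d \<rho> by (simp add: powr_divide powr_minus_divide[symmetric] powr_diff)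
  also have "C_inner \<Lambda> s p * (\<rho> / \<delta>) powr (s - p) \<le> C_inner \<Lambda> s p * (1 + \<rho> / \<delta>)"
    using C_inner_pos[OF \<Lambda>_pos p(2)] p d \<rho> by (intro mult_left_mono powr_le_one_plus) auto
  then have "ennreal (\<Lambda> + C_inner \<Lambda> s p * (\<rho> / \<delta>) powr (s - p)) \<le> ennreal (\<Lambda> + C_inner \<Lambda> s p * (1 + \<rho> / \<delta>))"
    by (intro ennreal_leI) auto
  finally show ?thesis .
qed

end

definition holder_weight :: "real \<Rightarrow> real \<Rightarrow> real \<Rightarrow> real" where
  "holder_weight \<alpha> \<delta> t = t powr \<alpha> / \<delta> powr \<alpha> * max 1 (t / \<delta>) powr (1 - \<alpha>)"

lemma holder_weight_ge:
  assumes "0 < \<delta>" "0 \<le> t" "\<alpha> \<le> 1"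
  shows "(t / \<delta>) powr \<alpha> \<le> holder_weight \<alpha> \<delta> t"
proof -
  have "1 \<le> max 1 (t / \<delta>) powr (1 - \<alpha>)" using assms by (intro ge_one_powr_ge_zero) auto
  moreover have "t powr \<alpha> / \<delta> powr \<alpha> = (t / \<delta>) powr \<alpha>" using assms by (simp add: powr_divide)
  ultimately show ?thesis unfolding holder_weight_def
    by (metis mult_left_mono mult.right_neutral powr_ge_zero)
qed

lemma holder_weight_nonneg: "0 < \<delta> \<Longrightarrow> 0 \<le> t \<Longrightarrow> \<alpha> \<le> 1 \<Longrightarrow> 0 \<le> holder_weight \<alpha> \<delta> t"
  using holder_weight_ge order_trans powr_ge_zero by metis

lemma holder_weight_ge_large:
  assumes d: "0 < \<delta>" and t: "\<delta> < 2 * t" and \<alpha>: "0 < \<alpha>" "\<alpha> \<le> 1"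
  shows "1 + t / \<delta> \<le> 4 * holder_weight \<alpha> \<delta> t"
proof -
  define q where "q = t / \<delta>"
  have q: "1/2 < q" using d t by (simp add: q_def field_simps)
  have E: "holder_weight \<alpha> \<delta> t = q powr \<alpha> * max 1 q powr (1 - \<alpha>)"
    using d t unfolding holder_weight_def q_def by (simp add: powr_divide)
  have "q \<le> holder_weight \<alpha> \<delta> t"
  proof (cases "1 \<le> q")
    case True
    then show ?thesis unfolding E by (simp add: max_def flip: powr_add)
  next
    case False
    then have "q powr 1 \<le> q powr \<alpha>" using q \<alpha> by (intro powr_mono') auto
    then show ?thesis unfolding E using q False by (simp add: max_def)
  qed
  then show ?thesis using q by (simp add: q_def)
qed

definition C_main :: "real \<Rightarrow> real \<Rightarrow> real \<Rightarrow> real" where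
  "C_main s \<alpha> \<Lambda> = C_holder s * (\<Lambda> + C_tail \<Lambda> s (s + \<alpha>))
     + 4 * (C_holder s * C_tail \<Lambda> s (s + \<alpha>) + 2 * \<Lambda> + 6 * C_inner \<Lambda> s (max (s - 1) (s / 2)))"

lemma C_main_pos: "0 < s \<Longrightarrow> 0 < \<alpha> \<Longrightarrow> 0 < \<Lambda> \<Longrightarrow> 0 < C_main s \<alpha> \<Lambda>"
  unfolding C_main_def using C_holder_pos[of s] C_tail_pos[of \<Lambda> s "s + \<alpha>"]
    C_inner_pos[of \<Lambda> "max (s - 1) (s / 2)" s]
  by (intro add_pos_pos mult_pos_pos add_pos_nonneg) auto

locale kernel_measure = holder_kernel \<Omega> s \<alpha> + growth_measure \<mu> s \<Lambda>
  for \<Omega> :: "real^'n \<Rightarrow> complex^'m" and s \<alpha> :: real and \<mu> :: "(real^'n) measure" and \<Lambda> :: real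
begin

lemma nn_integral_Kd_diff_close:
  assumes d: "0 < \<delta>" and close: "2 * norm (x - x') \<le> \<delta>"
  shows "(\<integral>\<^sup>+y. norm (Kd \<Omega> s \<delta> (x - y) - Kd \<Omega> s \<delta> (x' - y)) \<partial>\<mu>)
    \<le> ennreal (C_holder s * (\<Lambda> + C_tail \<Lambda> s (s + \<alpha>)) * (norm (x - x') / \<delta>) powr \<alpha>)"
proof -
  define t where "t = norm (x - x')"
  define T where "T = C_tail \<Lambda> s (s + \<alpha>)"
  have T: "0 < T" unfolding T_def using C_tail_pos[OF \<Lambda>_pos, of s "s+\<alpha>"] \<alpha>_pos by simp
  have "(\<integral>\<^sup>+y. norm (Kd \<Omega> s \<delta> (x - y) - Kd \<Omega> s \<delta> (x' - y)) \<partial>\<mu>)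
      \<le> ennreal ((C_holder s * t powr \<alpha> * \<delta> powr (-(s+\<alpha>))) * (\<Lambda> * \<delta> powr s)
        + (C_holder s * t powr \<alpha>) * (T * \<delta> powr (s - (s+\<alpha>))))"
  proof (rule nn_integral_le_lincomb2)
    fix y
    have "norm ((x - y) - (x' - y)) \<le> max \<delta> (norm (x - y)) / 2" using close by (simp add: max_def)
    from Kd_holder[OF d this] have
      "norm (Kd \<Omega> s \<delta> (x - y) - Kd \<Omega> s \<delta> (x' - y)) \<le> C_holder s * t powr \<alpha> * max \<delta> (dist x y) powr (-(s+\<alpha>))"
      by (simp add: t_def dist_norm)
    then show "norm (Kd \<Omega> s \<delta> (x - y) - Kd \<Omega> s \<delta> (x' - y))
      \<le> (C_holder s * t powr \<alpha> * \<delta> powr (-(s+\<alpha>))) * indicator (ball x \<delta>) y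
        + (C_holder s * t powr \<alpha>) * (indicator (- ball x \<delta>) y * dist x y powr (-(s+\<alpha>)))"
      by (cases "dist x y < \<delta>") (auto simp: indicator_def max_def)
  qed (use d T C_holder_pos[OF s_pos] \<alpha>_pos \<Lambda>_pos nn_integral_dist_powr_outside_ball[OF d, of "s+\<alpha>" x] in
      \<open>auto intro: nn_integral_indicator_ball_le simp: T_def\<close>)
  also have "(C_holder s * t powr \<alpha> * \<delta> powr (-(s+\<alpha>))) * (\<Lambda> * \<delta> powr s)
        + (C_holder s * t powr \<alpha>) * (T * \<delta> powr (s - (s+\<alpha>)))
      = C_holder s * (\<Lambda> + T) * (t powr \<alpha> * \<delta> powr (-\<alpha>))"
  proof -
    have "\<delta> powr (-(s+\<alpha>)) * \<delta> powr s = \<delta> powr (-\<alpha>)" by (simp flip: powr_add)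
    then show ?thesis by (simp add: algebra_simps)
  qed
  also have "t powr \<alpha> * \<delta> powr (-\<alpha>) = (t / \<delta>) powr \<alpha>"
    using d by (simp add: t_def powr_divide powr_minus_divide)
  finally show ?thesis by (simp add: t_def T_def)
qed

lemma norm_Kd_diff_le_far:
  assumes d: "0 < \<delta>" and far: "\<delta> < 2 * norm (x - x')"
  defines "t \<equiv> norm (x - x')"
  shows "norm (Kd \<Omega> s \<delta> (x - y) - Kd \<Omega> s \<delta> (x' - y))
    \<le> C_holder s * t powr \<alpha> * (indicator (- ball x (2 * t)) y * dist x y powr (-(s+\<alpha>)))
      + indicator (ball x (3 * t)) y * max \<delta> (dist x y) powr (-s)
      + indicator (ball x' (3 * t)) y * max \<delta> (dist x' y) powr (-s)"
proof (cases "2 * t \<le> dist x y")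
  case True
  have "norm ((x - y) - (x' - y)) \<le> max \<delta> (norm (x - y)) / 2"
    using True by (simp add: t_def dist_norm max_def)
  from Kd_holder[OF d this] have
    "norm (Kd \<Omega> s \<delta> (x - y) - Kd \<Omega> s \<delta> (x' - y)) \<le> C_holder s * t powr \<alpha> * dist x y powr (-(s+\<alpha>))"
    using True far by (simp add: t_def dist_norm max_def)
  then show ?thesis using True by (auto simp: indicator_def intro!: add_increasing2)
next
  case False
  have "norm (Kd \<Omega> s \<delta> (x - y) - Kd \<Omega> s \<delta> (x' - y)) \<le> norm (Kd \<Omega> s \<delta> (x - y)) + norm (Kd \<Omega> s \<delta> (x' - y))"
    by (rule norm_triangle_ineq4)
  also have "\<dots> \<le> max \<delta> (dist x y) powr (-s) + max \<delta> (dist x' y) powr (-s)"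
    using norm_Kd_le[OF d, of "x - y"] norm_Kd_le[OF d, of "x' - y"] by (simp add: dist_norm)
  finally have "norm (Kd \<Omega> s \<delta> (x - y) - Kd \<Omega> s \<delta> (x' - y))
      \<le> max \<delta> (dist x y) powr (-s) + max \<delta> (dist x' y) powr (-s)" .
  moreover have "dist x' y \<le> t + dist x y"
    using dist_triangle[of x' y x] by (simp add: t_def dist_norm norm_minus_commute)
  moreover have "0 < t" using d far unfolding t_def by linarith
  ultimately show ?thesis using False by (simp add: indicator_def)
qed

lemma nn_integral_Kd_diff_far:
  assumes d: "0 < \<delta>" and far: "\<delta> < 2 * norm (x - x')" and p: "0 < p" "p < s" "s - p \<le> 1"
  shows "(\<integral>\<^sup>+y. norm (Kd \<Omega> s \<delta> (x - y) - Kd \<Omega> s \<delta> (x' - y)) \<partial>\<mu>)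
    \<le> ennreal (C_holder s * C_tail \<Lambda> s (s + \<alpha>)
       + (2 * \<Lambda> + 6 * C_inner \<Lambda> s p) * (1 + norm (x - x') / \<delta>))"
proof -
  define t where "t = norm (x - x')"
  define T where "T = C_tail \<Lambda> s (s + \<alpha>)"
  define N where "N = \<Lambda> + C_inner \<Lambda> s p * (1 + 3 * t / \<delta>)"
  have T: "0 < T" unfolding T_def using C_tail_pos[OF \<Lambda>_pos, of s "s+\<alpha>"] \<alpha>_pos by simp
  have tp: "0 < t" unfolding t_def using d far by linarith
  have "(\<integral>\<^sup>+y. norm (Kd \<Omega> s \<delta> (x - y) - Kd \<Omega> s \<delta> (x' - y)) \<partial>\<mu>)
      \<le> ennreal ((C_holder s * t powr \<alpha>) * (T * (2 * t) powr (s - (s+\<alpha>))) + 1 * N + 1 * N)"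
  proof (rule nn_integral_le_lincomb3)
    fix y
    show "norm (Kd \<Omega> s \<delta> (x - y) - Kd \<Omega> s \<delta> (x' - y))
      \<le> (C_holder s * t powr \<alpha>) * (indicator (- ball x (2 * t)) y * dist x y powr (-(s+\<alpha>)))
        + 1 * (indicator (ball x (3 * t)) y * max \<delta> (dist x y) powr (-s))
        + 1 * (indicator (ball x' (3 * t)) y * max \<delta> (dist x' y) powr (-s))"
      using norm_Kd_diff_le_far[OF d far] by (simp add: t_def)
  qed (use d tp T C_holder_pos[OF s_pos] C_inner_pos[OF \<Lambda>_pos p(2)]
        nn_integral_dist_powr_outside_ball[of "2*t" "s+\<alpha>" x] \<alpha>_pos
        nn_integral_max_dist_powr_ball[OF d, of "3*t" p x] nn_integral_max_dist_powr_ball[OF d, of "3*t" p x'] p \<Lambda>_pos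
      in \<open>auto simp: T_def N_def\<close>)
  also have "(C_holder s * t powr \<alpha>) * (T * (2 * t) powr (s - (s+\<alpha>))) + 1 * N + 1 * N
      \<le> C_holder s * T + (2 * \<Lambda> + 6 * C_inner \<Lambda> s p) * (1 + t / \<delta>)"
  proof -
    have "t powr \<alpha> * (2 * t) powr (s - (s+\<alpha>)) = 2 powr (-\<alpha>)"
      using tp by (simp add: powr_mult powr_minus_divide)
    also have "\<dots> \<le> 1" using \<alpha>_pos two_powr_less_one[of "-\<alpha>"] by simp
    finally have "(C_holder s * t powr \<alpha>) * (T * (2 * t) powr (s - (s+\<alpha>))) \<le> C_holder s * T"
      using C_holder_pos[OF s_pos] T by (simp add: mult_ac mult_left_le)
    moreover have "2 * N \<le> (2 * \<Lambda> + 6 * C_inner \<Lambda> s p) * (1 + t / \<delta>)"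
      using \<Lambda>_pos C_inner_pos[OF \<Lambda>_pos p(2)] tp d by (simp add: N_def algebra_simps)
    ultimately show ?thesis by simp
  qed
  finally show ?thesis by (simp add: t_def T_def ennreal_leI)
qed

lemma nn_integral_Kd_diff_le:
  assumes d: "0 < \<delta>"
  shows "(\<integral>\<^sup>+y. norm (Kd \<Omega> s \<delta> (x - y) - Kd \<Omega> s \<delta> (x' - y)) \<partial>\<mu>)
    \<le> ennreal (C_main s \<alpha> \<Lambda> * holder_weight \<alpha> \<delta> (norm (x - x')))"
proof -
  define t where "t = norm (x - x')"
  define p where "p = max (s - 1) (s / 2)"
  have p: "0 < p" "p < s" "s - p \<le> 1" using s_pos by (auto simp: p_def)
  define A where "A = C_holder s * (\<Lambda> + C_tail \<Lambda> s (s + \<alpha>))"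
  define B where "B = C_holder s * C_tail \<Lambda> s (s + \<alpha>) + 2 * \<Lambda> + 6 * C_inner \<Lambda> s p"
  have AB: "0 < A" "0 < B" unfolding A_def B_def
    using C_holder_pos[OF s_pos] C_tail_pos[OF \<Lambda>_pos, of s "s+\<alpha>"] C_inner_pos[OF \<Lambda>_pos p(2)] \<alpha>_pos \<Lambda>_pos
    by (auto intro!: add_pos_pos mult_pos_pos)
  have C: "C_main s \<alpha> \<Lambda> = A + 4 * B" unfolding C_main_def A_def B_def p_def ..
  have w: "0 \<le> holder_weight \<alpha> \<delta> t" using d \<alpha>_le_1 by (simp add: holder_weight_nonneg t_def)
  show ?thesis
  proof (cases "2 * t \<le> \<delta>")
    case True
    have "A * (t / \<delta>) powr \<alpha> \<le> A * holder_weight \<alpha> \<delta> t"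
      using holder_weight_ge[OF d _ \<alpha>_le_1, of t] AB by (simp add: t_def)
    also have "\<dots> \<le> C_main s \<alpha> \<Lambda> * holder_weight \<alpha> \<delta> t"
      unfolding C using AB w by (simp add: mult_right_mono)
    finally show ?thesis using nn_integral_Kd_diff_close[OF d True[unfolded t_def]]
      by (auto simp: A_def t_def intro: order_trans ennreal_leI)
  next
    case False
    have "C_holder s * C_tail \<Lambda> s (s + \<alpha>) + (2 * \<Lambda> + 6 * C_inner \<Lambda> s p) * (1 + t / \<delta>) \<le> B * (1 + t / \<delta>)"
      using AB d C_holder_pos[OF s_pos] C_tail_pos[OF \<Lambda>_pos, of s "s+\<alpha>"] \<alpha>_pos
      by (simp add: B_def algebra_simps t_def)
    also have "\<dots> \<le> B * (4 * holder_weight \<alpha> \<delta> t)"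
      using holder_weight_ge_large[OF d _ \<alpha>_pos \<alpha>_le_1, of t] False AB by (intro mult_left_mono) auto
    also have "\<dots> \<le> C_main s \<alpha> \<Lambda> * holder_weight \<alpha> \<delta> t"
      unfolding C using AB w by (simp add: algebra_simps)
    finally show ?thesis using nn_integral_Kd_diff_far[OF d _ p, of x x'] False
      by (auto simp: t_def intro: order_trans ennreal_leI)
  qed
qed

end

definition tsupport :: "('a::topological_space \<Rightarrow> 'b::zero) \<Rightarrow> 'a set" where
  "tsupport f = closure {x. f x \<noteq> 0}"

lemma tsupport_memI: "f x \<noteq> 0 \<Longrightarrow> x \<in> tsupport f"
  unfolding tsupport_def by (simp add: closure_def)

lemma compact_tsupport_diff:
  fixes f g :: "'a::t2_space \<Rightarrow> 'b::real_vector"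
  assumes "compact (tsupport f)" "compact (tsupport g)"
  shows "compact (tsupport (\<lambda>x. f x - g x))"
proof -
  have "tsupport (\<lambda>x. f x - g x) \<subseteq> tsupport f \<union> tsupport g"
    using closure_subset[of "{x. f x \<noteq> 0}"] closure_subset[of "{x. g x \<noteq> 0}"] unfolding tsupport_def
    by (intro closure_minimal closed_Un closed_closure) force+
  moreover have "compact ((tsupport f \<union> tsupport g) \<inter> tsupport (\<lambda>x. f x - g x))"
    using assms by (intro compact_Int_closed compact_Un) (auto simp: tsupport_def)
  ultimately show ?thesis by (simp add: Int_absorb1)
qed

lemma Tdelta_of_real:
  fixes \<Omega> :: "real^'n \<Rightarrow> complex^'m"
  shows "Tdelta \<Omega> s \<mu> \<delta> (\<lambda>y. complex_of_real (\<phi> y)) x = (\<integral>y. \<phi> y *\<^sub>R Kd \<Omega> s \<delta> (x - y) \<partial>\<mu>)"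
proof -
  have "(\<chi> i. complex_of_real a * v $ i) = a *\<^sub>R v" for a and v :: "complex^'m"
    by (simp add: vec_eq_iff) (simp add: scaleR_conv_of_real)
  then show ?thesis unfolding Tdelta_def by simp
qed

lemma (in growth_measure) integrable_pair_bounded_compact_support:
  fixes f :: "(real^'n) \<times> (real^'n) \<Rightarrow> 'b::{banach, second_countable_topology}"
  assumes [measurable]: "f \<in> borel_measurable (\<mu> \<Otimes>\<^sub>M \<mu>)" and K: "compact K1" "compact K2"
    and "\<And>p. f p \<noteq> 0 \<Longrightarrow> p \<in> K1 \<times> K2" and "\<And>p. norm (f p) \<le> b"
  shows "integrable (\<mu> \<Otimes>\<^sub>M \<mu>) f"
proof (rule integrableI_bounded_set[where A="K1 \<times> K2" and B=b])
  have K12: "K1 \<in> sets \<mu>" "K2 \<in> sets \<mu>" using K by (simp_all add: sets_\<mu> compact_imp_closed borel_closed)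
  then show "K1 \<times> K2 \<in> sets (\<mu> \<Otimes>\<^sub>M \<mu>)" by (rule pair_measureI)
  show "emeasure (\<mu> \<Otimes>\<^sub>M \<mu>) (K1 \<times> K2) < \<infinity>"
    using emeasure_compact_finite[OF K(1)] emeasure_compact_finite[OF K(2)]
    by (simp add: sigma_finite.emeasure_pair_measure_Times[OF K12] ennreal_mult_less_top)
qed (use assms in auto)

locale cutoff_setting = kernel_measure \<Omega> s \<alpha> \<mu> \<Lambda>
  for \<Omega> :: "real^'n \<Rightarrow> complex^'m" and s \<alpha> :: real and \<mu> :: "(real^'n) measure" and \<Lambda> :: real +
  fixes \<eta> :: "real^'n \<Rightarrow> real" and B' :: "(real^'n) set"
  assumes eta_adm: "eta_adm \<mu> B' \<eta>"
begin

lemma eta_nonneg: "0 \<le> \<eta> z"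
  using eta_adm unfolding eta_adm_def by blast

lemma compact_tsupport_eta: "compact (tsupport \<eta>)"
  using eta_adm unfolding eta_adm_def tsupport_def by blast

lemma eta_nonzero_in_B': "\<eta> z \<noteq> 0 \<Longrightarrow> z \<in> B'"
  using eta_adm tsupport_memI[of \<eta> z] unfolding eta_adm_def tsupport_def by blast

lemma integral_eta: "integral\<^sup>L \<mu> \<eta> = 1"
  using eta_adm unfolding eta_adm_def by blast

definition L_eta :: real where "L_eta = (SOME L. L-lipschitz_on UNIV \<eta>)"

lemma eta_lipschitz: "L_eta-lipschitz_on UNIV \<eta>"
  using eta_adm someI_ex[of "\<lambda>L. L-lipschitz_on UNIV \<eta>"] unfolding eta_adm_def L_eta_def by blast

lemma L_eta_nonneg: "0 \<le> L_eta"
  using eta_lipschitz by (simp add: lipschitz_on_def)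

lemma eta_measurable [measurable]: "\<eta> \<in> borel_measurable borel"
  by (rule borel_measurable_continuous_onI[OF lipschitz_on_continuous_on[OF eta_lipschitz]])

lemma integrable_eta: "integrable \<mu> \<eta>"
  using integral_eta not_integrable_integral_eq by force

lemma eta_bounded: "\<exists>M. \<forall>z. \<eta> z \<le> M"
proof -
  have "compact (\<eta> ` tsupport \<eta>)"
    using compact_tsupport_eta lipschitz_on_continuous_on[OF eta_lipschitz]
    by (intro compact_continuous_image) (auto intro: continuous_on_subset)
  then obtain a where a: "\<forall>v\<in>\<eta> ` tsupport \<eta>. norm v \<le> a" using compact_imp_bounded bounded_iff by metis
  have "\<eta> z \<le> max a 0" for z
    using a tsupport_memI[of \<eta> z] by (cases "\<eta> z = 0") auto
  then show ?thesis by blast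
qed

definition M_eta :: real where "M_eta = (SOME M. \<forall>z. \<eta> z \<le> M)"

lemma eta_le_M_eta: "\<eta> z \<le> M_eta"
  unfolding M_eta_def using someI_ex[OF eta_bounded] by blast

lemma M_eta_nonneg: "0 \<le> M_eta"
  using eta_le_M_eta[of z] eta_nonneg[of z] by simp

lemma integrable_eta_scaleR_bounded:
  fixes F :: "real^'n \<Rightarrow> 'b::{banach, second_countable_topology}"
  assumes [measurable]: "F \<in> borel_measurable borel" and "\<And>z. \<eta> z \<noteq> 0 \<Longrightarrow> norm (F z) \<le> b"
  shows "integrable \<mu> (\<lambda>z. \<eta> z *\<^sub>R F z)"
proof (rule integrable_bounded_compact_support[OF _ compact_tsupport_eta])
  fix z show "norm (\<eta> z *\<^sub>R F z) \<le> M_eta * max b 0"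
    using assms eta_le_M_eta[of z] eta_nonneg[of z] M_eta_nonneg by (cases "\<eta> z = 0") (auto intro!: mult_mono simp: le_max_iff_disj)
qed (auto intro: tsupport_memI)

lemma norm_eta_average_le:
  fixes F :: "real^'n \<Rightarrow> complex^'m"
  assumes int: "integrable \<mu> (\<lambda>z. \<eta> z *\<^sub>R F z)" and b: "\<And>z. \<eta> z \<noteq> 0 \<Longrightarrow> norm (F z) \<le> b"
  shows "norm (\<integral>z. \<eta> z *\<^sub>R F z \<partial>\<mu>) \<le> b"
proof -
  have "norm (\<integral>z. \<eta> z *\<^sub>R F z \<partial>\<mu>) \<le> (\<integral>z. norm (\<eta> z *\<^sub>R F z) \<partial>\<mu>)" by (rule integral_norm_bound)
  also have "\<dots> \<le> (\<integral>z. \<eta> z * b \<partial>\<mu>)"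
  proof (rule integral_mono)
    fix z show "norm (\<eta> z *\<^sub>R F z) \<le> \<eta> z * b"
      using b[of z] eta_nonneg[of z] by (cases "\<eta> z = 0") (auto intro: mult_left_mono)
  qed (use integrable_norm[OF int] integrable_eta in auto)
  also have "\<dots> = b" using integral_eta by simp
  finally show ?thesis .
qed

definition eta_potential :: "real^'n \<Rightarrow> complex^'m" where
  "eta_potential y = (\<integral>z. \<eta> z *\<^sub>R Ker \<Omega> s (z - y) \<partial>\<mu>)"

lemma eta_potential_measurable [measurable]: "eta_potential \<in> borel_measurable borel"
  unfolding eta_potential_def by measurable

lemma eta_potential_far:
  assumes r: "0 < r" and far: "\<And>z. \<eta> z \<noteq> 0 \<Longrightarrow> r \<le> dist z y"
  shows "integrable \<mu> (\<lambda>z. \<eta> z *\<^sub>R Ker \<Omega> s (z - y))" and "norm (eta_potential y) \<le> r powr (-s)"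
proof -
  have b: "norm (Ker \<Omega> s (z - y)) \<le> r powr (-s)" if "\<eta> z \<noteq> 0" for z
    using norm_Ker_le_radius[OF r] far[OF that] by (simp add: dist_norm)
  show int: "integrable \<mu> (\<lambda>z. \<eta> z *\<^sub>R Ker \<Omega> s (z - y))"
    using b by (intro integrable_eta_scaleR_bounded) auto
  show "norm (eta_potential y) \<le> r powr (-s)"
    unfolding eta_potential_def using int b by (rule norm_eta_average_le)
qed

end

context cutoff_setting
begin

text \<open>The paper's ball \<open>B = B(c, r)\<close> and cut-off \<open>\<phi>\<close>, without reference to the point \<open>x \<in> B\<close>.\<close>
definition adapted_cutoff :: "real^'n \<Rightarrow> real \<Rightarrow> (real^'n \<Rightarrow> real) \<Rightarrow> bool" where
  "adapted_cutoff c r \<phi> \<longleftrightarrow> 0 < r \<and> B' \<subseteq> ball c r \<and> (\<forall>y\<in>ball c (2 * r). \<phi> y = 1) \<and>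
     \<phi> \<in> borel_measurable borel \<and> compact (tsupport \<phi>) \<and> (\<forall>y. 0 \<le> \<phi> y \<and> \<phi> y \<le> 1)"

lemma phi_adm_imp_adapted_cutoff:
  "phi_adm \<mu> B' x B \<phi> \<Longrightarrow> \<exists>c r. adapted_cutoff c r \<phi> \<and> x \<in> ball c r"
  unfolding phi_adm_def adapted_cutoff_def tsupport_def by blast

lemma dist_eta_outside_double_ball:
  assumes "B' \<subseteq> ball c r" "\<eta> z \<noteq> 0" "y \<notin> ball c (2 * r)"
  shows "r \<le> dist z y"
proof -
  have "dist c z < r" using assms(1) eta_nonzero_in_B'[OF assms(2)] by auto
  moreover have "2 * r \<le> dist c y" using assms(3) by simp
  ultimately show ?thesis using dist_triangle[of c y z] by linarith
qed

context
  fixes c r \<phi> assumes cut: "adapted_cutoff c r \<phi>"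
begin

lemma cutoff_radius_pos: "0 < r"
  and B'_subset_ball: "B' \<subseteq> ball c r"
  and cutoff_eq_1: "y \<in> ball c (2 * r) \<Longrightarrow> \<phi> y = 1"
  and cutoff_measurable [measurable]: "\<phi> \<in> borel_measurable borel"
  and compact_tsupport_cutoff: "compact (tsupport \<phi>)"
  and cutoff_nonneg: "0 \<le> \<phi> y"
  and cutoff_le_1: "\<phi> y \<le> 1"
  using cut unfolding adapted_cutoff_def by auto

lemma norm_cutoff_Kd_le: "0 < \<delta> \<Longrightarrow> norm (\<phi> y *\<^sub>R Kd \<Omega> s \<delta> (z - y)) \<le> \<delta> powr (-s)"
  using mult_mono[OF cutoff_le_1 norm_Kd_le_delta[of \<delta> "z - y"]] cutoff_nonneg[of y] by simp

lemma integrable_cutoff_Kd: "0 < \<delta> \<Longrightarrow> integrable \<mu> (\<lambda>y. \<phi> y *\<^sub>R Kd \<Omega> s \<delta> (z - y))"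
  by (rule integrable_bounded_compact_support[OF _ compact_tsupport_cutoff, where b="\<delta> powr (-s)"])
    (auto intro: tsupport_memI norm_cutoff_Kd_le[simplified])

lemma bounded_cutoff_potential:
  assumes d: "0 < \<delta>"
  shows "\<exists>b. \<forall>z. norm (\<integral>y. \<phi> y *\<^sub>R Kd \<Omega> s \<delta> (z - y) \<partial>\<mu>) \<le> b"
proof -
  let ?S = "tsupport \<phi>"
  have S: "?S \<in> sets \<mu>" "emeasure \<mu> ?S < \<infinity>"
    using compact_tsupport_cutoff emeasure_compact_finite
    by (auto simp: sets_\<mu> compact_imp_closed borel_closed)
  have "norm (\<integral>y. \<phi> y *\<^sub>R Kd \<Omega> s \<delta> (z - y) \<partial>\<mu>) \<le> \<delta> powr (-s) * measure \<mu> ?S" for z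
  proof -
    have "norm (\<integral>y. \<phi> y *\<^sub>R Kd \<Omega> s \<delta> (z - y) \<partial>\<mu>) \<le> (\<integral>y. norm (\<phi> y *\<^sub>R Kd \<Omega> s \<delta> (z - y)) \<partial>\<mu>)"
      by (rule integral_norm_bound)
    also have "\<dots> \<le> (\<integral>y. \<delta> powr (-s) * indicator ?S y \<partial>\<mu>)"
    proof (rule integral_mono)
      fix y show "norm (\<phi> y *\<^sub>R Kd \<Omega> s \<delta> (z - y)) \<le> \<delta> powr (-s) * indicator ?S y"
        using norm_cutoff_Kd_le[OF d, of y z] tsupport_memI[of \<phi> y] by (cases "\<phi> y = 0") auto
    qed (use S integrable_norm[OF integrable_cutoff_Kd[OF d]] in auto)
    also have "\<dots> = \<delta> powr (-s) * measure \<mu> ?S" by simp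
    finally show ?thesis .
  qed
  then show ?thesis by blast
qed

context
  fixes x assumes x: "x \<in> ball c r"
begin

text \<open>For \<open>y\<close> outside \<open>2B\<close>, \<open>K(x - y)\<close> is close to its \<open>\<eta>\<close>-average over \<open>z\<close>, since \<open>x\<close> and
  \<open>supp \<eta>\<close> both lie in \<open>B\<close>.\<close>
lemma norm_Kd_diff_eta_potential_le:
  assumes y: "y \<notin> ball c (2 * r)" and d: "max \<delta> (4 * r) \<le> dist x y"
  shows "norm (Kd \<Omega> s \<delta> (x - y) - eta_potential y) \<le> C_holder s * (2 * r) powr \<alpha> * dist x y powr (-(s+\<alpha>))"
proof -
  have far: "r \<le> dist z y" if "\<eta> z \<noteq> 0" for z
    using dist_eta_outside_double_ball[OF B'_subset_ball that y] .
  have xz: "dist x z \<le> 2 * r" if "\<eta> z \<noteq> 0" for z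
    using x eta_nonzero_in_B'[OF that] B'_subset_ball dist_triangle[of x z c] by (auto simp: dist_commute)
  have int: "integrable \<mu> (\<lambda>z. \<eta> z *\<^sub>R Ker \<Omega> s (z - y))"
    by (rule eta_potential_far(1)[OF cutoff_radius_pos far])
  have "eta_potential y - Ker \<Omega> s (x - y) = (\<integral>z. \<eta> z *\<^sub>R (Ker \<Omega> s (z - y) - Ker \<Omega> s (x - y)) \<partial>\<mu>)"
    using int integrable_eta integral_eta by (simp add: eta_potential_def scaleR_diff_right)
  moreover have "norm (\<integral>z. \<eta> z *\<^sub>R (Ker \<Omega> s (z - y) - Ker \<Omega> s (x - y)) \<partial>\<mu>)
      \<le> C_holder s * (2 * r) powr \<alpha> * dist x y powr (-(s+\<alpha>))"
  proof (rule norm_eta_average_le)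
    show "integrable \<mu> (\<lambda>z. \<eta> z *\<^sub>R (Ker \<Omega> s (z - y) - Ker \<Omega> s (x - y)))"
      using int integrable_eta by (simp add: scaleR_diff_right)
    fix z assume z: "\<eta> z \<noteq> 0"
    have r_le: "r \<le> norm (z - y)" "r \<le> norm (x - y)" and mx: "max r (norm (x - y)) = dist x y"
      using far[OF z] d cutoff_radius_pos by (auto simp: dist_norm)
    have "norm ((x - y) - (z - y)) \<le> max r (norm (x - y)) / 2"
      using xz[OF z] d unfolding mx by (simp add: dist_norm)
    from Kd_holder[OF cutoff_radius_pos this]
    have "norm (Ker \<Omega> s (x - y) - Ker \<Omega> s (z - y))
        \<le> C_holder s * norm (x - z) powr \<alpha> * dist x y powr (-(s+\<alpha>))"
      using r_le unfolding mx by (simp add: Kd_eq_Ker)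
    also have "\<dots> \<le> C_holder s * (2 * r) powr \<alpha> * dist x y powr (-(s+\<alpha>))"
      using xz[OF z] \<alpha>_pos C_holder_pos[OF s_pos]
      by (intro mult_right_mono mult_left_mono powr_mono2) (auto simp: dist_norm)
    finally show "norm (Ker \<Omega> s (z - y) - Ker \<Omega> s (x - y)) \<le> C_holder s * (2 * r) powr \<alpha> * dist x y powr (-(s+\<alpha>))"
      by (simp add: norm_minus_commute)
  qed
  moreover have "Kd \<Omega> s \<delta> (x - y) = Ker \<Omega> s (x - y)"
    using d by (intro Kd_eq_Ker) (simp add: dist_norm)
  ultimately show ?thesis by (metis minus_diff_eq norm_minus_cancel)
qed

lemma integrable_cutoff_compl_Kd_diff:
  assumes d: "0 < \<delta>"
  shows "integrable \<mu> (\<lambda>y. (1 - \<phi> y) *\<^sub>R (Kd \<Omega> s \<delta> (x - y) - eta_potential y))"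
proof (rule integrableI_bounded)
  define A where "A = max \<delta> (4 * r)"
  have A: "0 < A" using d by (simp add: A_def)
  have "(\<integral>\<^sup>+y. norm ((1 - \<phi> y) *\<^sub>R (Kd \<Omega> s \<delta> (x - y) - eta_potential y)) \<partial>\<mu>)
     \<le> ennreal ((\<delta> powr (-s) + r powr (-s)) * (\<Lambda> * A powr s)
        + (C_holder s * (2 * r) powr \<alpha>) * (C_tail \<Lambda> s (s+\<alpha>) * A powr (s - (s+\<alpha>))))"
  proof (rule nn_integral_le_lincomb2)
    fix y
    show "norm ((1 - \<phi> y) *\<^sub>R (Kd \<Omega> s \<delta> (x - y) - eta_potential y))
      \<le> (\<delta> powr (-s) + r powr (-s)) * indicator (ball x A) y
        + (C_holder s * (2 * r) powr \<alpha>) * (indicator (- ball x A) y * dist x y powr (-(s+\<alpha>)))"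
    proof (cases "y \<in> ball c (2 * r)")
      case False
      have "norm ((1 - \<phi> y) *\<^sub>R (Kd \<Omega> s \<delta> (x - y) - eta_potential y)) \<le> norm (Kd \<Omega> s \<delta> (x - y) - eta_potential y)"
        using cutoff_nonneg[of y] cutoff_le_1[of y] by (simp add: mult_left_le_one_le)
      moreover have "norm (eta_potential y) \<le> r powr (-s)"
        using eta_potential_far(2)[OF cutoff_radius_pos dist_eta_outside_double_ball[OF B'_subset_ball _ False]] .
      then have "norm (Kd \<Omega> s \<delta> (x - y) - eta_potential y) \<le> \<delta> powr (-s) + r powr (-s)"
        using norm_Kd_le_delta[OF d, of "x - y"] norm_triangle_ineq4[of "Kd \<Omega> s \<delta> (x - y)" "eta_potential y"] by linarith
      moreover have "dist x y \<ge> A \<Longrightarrow>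
          norm (Kd \<Omega> s \<delta> (x - y) - eta_potential y) \<le> C_holder s * (2 * r) powr \<alpha> * dist x y powr (-(s+\<alpha>))"
        using norm_Kd_diff_eta_potential_le[OF False] by (simp add: A_def)
      ultimately show ?thesis by (cases "dist x y < A") (auto simp: indicator_def)
    qed (use cutoff_eq_1 C_holder_pos[OF s_pos] in \<open>simp add: indicator_def\<close>)
  qed (use A cutoff_radius_pos d C_holder_pos[OF s_pos] \<Lambda>_pos \<alpha>_pos C_tail_pos[OF \<Lambda>_pos, of s "s+\<alpha>"]
        nn_integral_dist_powr_outside_ball[OF A, of "s+\<alpha>" x]
      in \<open>auto intro: nn_integral_indicator_ball_le add_nonneg_nonneg\<close>)
  then show "(\<integral>\<^sup>+y. norm ((1 - \<phi> y) *\<^sub>R (Kd \<Omega> s \<delta> (x - y) - eta_potential y)) \<partial>\<mu>) < \<infinity>"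
    using le_less_trans by fastforce
qed simp

text \<open>The inner \<open>\<eta>\<close>-integral in the definition of \<open>Ttilde\<close> is taken only where \<open>\<phi> \<noteq> 1\<close>,
  hence outside \<open>2B\<close>, where the kernel \<open>K(z - y)\<close> is integrable in \<open>z\<close>; this separates the
  two inner integrals.\<close>
lemma Ttilde_eq:
  assumes d: "0 < \<delta>"
  shows "Ttilde \<Omega> s \<mu> \<eta> \<delta> \<phi> x
    = (\<integral>y. Kd \<Omega> s \<delta> (x - y) - (1 - \<phi> y) *\<^sub>R eta_potential y \<partial>\<mu>) - TmuPair \<Omega> s \<mu> \<phi> \<eta>"
proof -
  have inner: "(1 - \<phi> y) *\<^sub>R (\<integral>z. \<eta> z *\<^sub>R (Kd \<Omega> s \<delta> (x - y) - Ker \<Omega> s (z - y)) \<partial>\<mu>)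
      = (1 - \<phi> y) *\<^sub>R (Kd \<Omega> s \<delta> (x - y) - eta_potential y)" for y
  proof (cases "y \<in> ball c (2 * r)")
    case False
    have "integrable \<mu> (\<lambda>z. \<eta> z *\<^sub>R Ker \<Omega> s (z - y))"
      using eta_potential_far(1)[OF cutoff_radius_pos dist_eta_outside_double_ball[OF B'_subset_ball _ False]] .
    then have "(\<integral>z. \<eta> z *\<^sub>R (Kd \<Omega> s \<delta> (x - y) - Ker \<Omega> s (z - y)) \<partial>\<mu>)
        = (\<integral>z. \<eta> z *\<^sub>R Kd \<Omega> s \<delta> (x - y) \<partial>\<mu>) - eta_potential y"
      unfolding eta_potential_def scaleR_diff_right
      by (intro Bochner_Integration.integral_diff integrable_scaleR_left integrable_eta)
    also have "(\<integral>z. \<eta> z *\<^sub>R Kd \<Omega> s \<delta> (x - y) \<partial>\<mu>) = Kd \<Omega> s \<delta> (x - y)"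
      using integrable_eta integral_eta by simp
    finally show ?thesis by simp
  qed (simp add: cutoff_eq_1)
  have "Ttilde \<Omega> s \<mu> \<eta> \<delta> \<phi> x = (\<integral>y. \<phi> y *\<^sub>R Kd \<Omega> s \<delta> (x - y) \<partial>\<mu>) - TmuPair \<Omega> s \<mu> \<phi> \<eta>
      + (\<integral>y. (1 - \<phi> y) *\<^sub>R (Kd \<Omega> s \<delta> (x - y) - eta_potential y) \<partial>\<mu>)"
    unfolding Ttilde_def Tdelta_of_real inner ..
  also have "\<dots> = (\<integral>y. \<phi> y *\<^sub>R Kd \<Omega> s \<delta> (x - y) + (1 - \<phi> y) *\<^sub>R (Kd \<Omega> s \<delta> (x - y) - eta_potential y) \<partial>\<mu>)
      - TmuPair \<Omega> s \<mu> \<phi> \<eta>"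
    using integrable_cutoff_Kd[OF d] integrable_cutoff_compl_Kd_diff[OF d] by simp
  finally show ?thesis by (simp add: algebra_simps)
qed

lemma integrable_Ttilde_integrand:
  assumes d: "0 < \<delta>"
  shows "integrable \<mu> (\<lambda>y. Kd \<Omega> s \<delta> (x - y) - (1 - \<phi> y) *\<^sub>R eta_potential y)"
  using Bochner_Integration.integrable_add[OF integrable_cutoff_Kd[OF d, of x] integrable_cutoff_compl_Kd_diff[OF d]]
  by (simp add: algebra_simps)

end

end

end

context cutoff_setting
begin

definition pairing :: "(real^'n \<Rightarrow> real) \<Rightarrow> real \<Rightarrow> complex^'m" where
  "pairing \<phi> \<delta> = (\<integral>z. \<eta> z *\<^sub>R Tdelta \<Omega> s \<mu> \<delta> (\<lambda>y. complex_of_real (\<phi> y)) z \<partial>\<mu>)"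

lemma TmuPair_eq_Lim_pairing: "TmuPair \<Omega> s \<mu> \<phi> \<eta> = Lim (at_right 0) (pairing \<phi>)"
  unfolding TmuPair_def pairing_def ..

lemma pairing_eq: "pairing \<phi> \<delta> = (\<integral>z. \<eta> z *\<^sub>R (\<integral>y. \<phi> y *\<^sub>R Kd \<Omega> s \<delta> (z - y) \<partial>\<mu>) \<partial>\<mu>)"
  unfolding pairing_def Tdelta_of_real ..

lemma abs_cutoff_diff_le_1:
  "adapted_cutoff c1 r1 \<phi>1 \<Longrightarrow> adapted_cutoff c2 r2 \<phi>2 \<Longrightarrow> \<bar>\<phi>1 y - \<phi>2 y\<bar> \<le> 1"
  using cutoff_nonneg[of c1 r1 \<phi>1 y] cutoff_le_1[of c1 r1 \<phi>1 y] cutoff_nonneg[of c2 r2 \<phi>2 y] cutoff_le_1[of c2 r2 \<phi>2 y]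
  by (simp add: abs_le_iff)

lemma cutoffs_differ_far_from_eta:
  assumes "adapted_cutoff c1 r1 \<phi>1" "adapted_cutoff c2 r2 \<phi>2"
  shows "\<exists>\<rho>>0. \<forall>z y. \<eta> z \<noteq> 0 \<longrightarrow> \<phi>1 y \<noteq> \<phi>2 y \<longrightarrow> \<rho> \<le> dist z y"
proof -
  have "min r1 r2 \<le> dist z y" if "\<eta> z \<noteq> 0" "\<phi>1 y \<noteq> \<phi>2 y" for z y
  proof (cases "y \<in> ball c1 (2 * r1)")
    case True
    then have "y \<notin> ball c2 (2 * r2)" using that(2) cutoff_eq_1[OF assms(1)] cutoff_eq_1[OF assms(2)] by auto
    then have "r2 \<le> dist z y" by (rule dist_eta_outside_double_ball[OF B'_subset_ball[OF assms(2)] that(1)])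
    then show ?thesis by simp
  next
    case False
    then have "r1 \<le> dist z y" by (rule dist_eta_outside_double_ball[OF B'_subset_ball[OF assms(1)] that(1)])
    then show ?thesis by simp
  qed
  then show ?thesis
    using cutoff_radius_pos[OF assms(1)] cutoff_radius_pos[OF assms(2)] by (intro exI[of _ "min r1 r2"]) auto
qed

context
  fixes g :: "real^'n \<Rightarrow> real" and \<rho> :: real
  assumes g_measurable [measurable]: "g \<in> borel_measurable borel"
    and compact_tsupport_g: "compact (tsupport g)" and abs_g_le_1: "\<And>y. \<bar>g y\<bar> \<le> 1"
    and \<rho>_pos: "0 < \<rho>" and g_far: "\<And>z y. \<eta> z \<noteq> 0 \<Longrightarrow> g y \<noteq> 0 \<Longrightarrow> \<rho> \<le> dist z y"
begin

lemma integrable_scaleR_eta_potential: "integrable \<mu> (\<lambda>y. g y *\<^sub>R eta_potential y)"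
proof (rule integrable_bounded_compact_support[OF _ compact_tsupport_g, where b="\<rho> powr (-s)"])
  fix y show "norm (g y *\<^sub>R eta_potential y) \<le> \<rho> powr (-s)"
  proof (cases "g y = 0")
    case False
    then have "norm (eta_potential y) \<le> \<rho> powr (-s)" using eta_potential_far(2)[OF \<rho>_pos g_far] by blast
    then show ?thesis using abs_g_le_1[of y] mult_mono[of "\<bar>g y\<bar>" 1 "norm (eta_potential y)"] by simp
  qed simp
qed (auto intro: tsupport_memI)

lemma integrable_eta_g_Ker: "integrable (\<mu> \<Otimes>\<^sub>M \<mu>) (\<lambda>(z, y). (\<eta> z * g y) *\<^sub>R Ker \<Omega> s (z - y))"
proof (rule integrable_pair_bounded_compact_support[OF _ compact_tsupport_eta compact_tsupport_g,
      where b="M_eta * \<rho> powr (-s)"])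
  fix p :: "(real^'n) \<times> (real^'n)"
  obtain z y where p: "p = (z, y)" by (cases p)
  show "(case p of (z, y) \<Rightarrow> (\<eta> z * g y) *\<^sub>R Ker \<Omega> s (z - y)) \<noteq> 0 \<Longrightarrow> p \<in> tsupport \<eta> \<times> tsupport g"
    unfolding p by (auto intro: tsupport_memI)
  show "norm (case p of (z, y) \<Rightarrow> (\<eta> z * g y) *\<^sub>R Ker \<Omega> s (z - y)) \<le> M_eta * \<rho> powr (-s)"
  proof (cases "\<eta> z = 0 \<or> g y = 0")
    case False
    then have "norm (Ker \<Omega> s (z - y)) \<le> \<rho> powr (-s)"
      using g_far[of z y] by (intro norm_Ker_le_radius[OF \<rho>_pos]) (auto simp: dist_norm)
    then have "\<eta> z * \<bar>g y\<bar> * norm (Ker \<Omega> s (z - y)) \<le> M_eta * 1 * \<rho> powr (-s)"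
      using eta_le_M_eta[of z] eta_nonneg[of z] abs_g_le_1[of y] by (intro mult_mono) auto
    then show ?thesis unfolding p using eta_nonneg[of z] by (simp add: abs_mult)
  qed (use M_eta_nonneg p in auto)
qed measurable

text \<open>Where \<open>\<eta>(z) g(y) \<noteq> 0\<close> we have \<open>|z - y| \<ge> \<rho> \<ge> \<delta>\<close>, so the truncated kernel is the true
  kernel there and Fubini applies to the absolutely integrable \<open>\<eta>(z) g(y) K(z - y)\<close>.\<close>
lemma eta_average_g_Kd_eq:
  assumes d: "0 < \<delta>" "\<delta> \<le> \<rho>"
  shows "(\<integral>z. \<eta> z *\<^sub>R (\<integral>y. g y *\<^sub>R Kd \<Omega> s \<delta> (z - y) \<partial>\<mu>) \<partial>\<mu>) = (\<integral>y. g y *\<^sub>R eta_potential y \<partial>\<mu>)"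
proof -
  have "\<eta> z *\<^sub>R (\<integral>y. g y *\<^sub>R Kd \<Omega> s \<delta> (z - y) \<partial>\<mu>) = (\<integral>y. (\<eta> z * g y) *\<^sub>R Ker \<Omega> s (z - y) \<partial>\<mu>)" for z
  proof (cases "\<eta> z = 0")
    case False
    have "g y *\<^sub>R Kd \<Omega> s \<delta> (z - y) = g y *\<^sub>R Ker \<Omega> s (z - y)" for y
      using g_far[OF False, of y] d by (cases "g y = 0") (auto simp: Kd_eq_Ker dist_norm)
    then have "(\<integral>y. g y *\<^sub>R Kd \<Omega> s \<delta> (z - y) \<partial>\<mu>) = (\<integral>y. g y *\<^sub>R Ker \<Omega> s (z - y) \<partial>\<mu>)"
      by (intro Bochner_Integration.integral_cong) auto
    then show ?thesis by (simp flip: scaleR_scaleR)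
  qed simp
  then have "(\<integral>z. \<eta> z *\<^sub>R (\<integral>y. g y *\<^sub>R Kd \<Omega> s \<delta> (z - y) \<partial>\<mu>) \<partial>\<mu>)
      = (\<integral>z. (\<integral>y. (\<eta> z * g y) *\<^sub>R Ker \<Omega> s (z - y) \<partial>\<mu>) \<partial>\<mu>)" by simp
  also have "\<dots> = (\<integral>y. (\<integral>z. (\<eta> z * g y) *\<^sub>R Ker \<Omega> s (z - y) \<partial>\<mu>) \<partial>\<mu>)"
    using pair.Fubini_integral[OF integrable_eta_g_Ker] by simp
  also have "\<dots> = (\<integral>y. g y *\<^sub>R eta_potential y \<partial>\<mu>)"
  proof -
    have "(\<lambda>z. (\<eta> z * g y) *\<^sub>R Ker \<Omega> s (z - y)) = (\<lambda>z. g y *\<^sub>R (\<eta> z *\<^sub>R Ker \<Omega> s (z - y)))" for y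
      by (simp add: fun_eq_iff mult.commute)
    then show ?thesis unfolding eta_potential_def by (simp only: integral_scaleR_right)
  qed
  finally show ?thesis .
qed

end

lemma pairing_diff_eventually_const:
  assumes cut1: "adapted_cutoff c1 r1 \<phi>1" and cut2: "adapted_cutoff c2 r2 \<phi>2"
  shows "\<forall>\<^sub>F \<delta> in at_right 0. pairing \<phi>1 \<delta> - pairing \<phi>2 \<delta> = (\<integral>y. (\<phi>1 y - \<phi>2 y) *\<^sub>R eta_potential y \<partial>\<mu>)"
proof -
  obtain \<rho> where \<rho>: "0 < \<rho>" "\<And>z y. \<eta> z \<noteq> 0 \<Longrightarrow> \<phi>1 y \<noteq> \<phi>2 y \<Longrightarrow> \<rho> \<le> dist z y"
    using cutoffs_differ_far_from_eta[OF cut1 cut2] by blast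
  note [measurable] = cutoff_measurable[OF cut1] cutoff_measurable[OF cut2]
  have "pairing \<phi>1 \<delta> - pairing \<phi>2 \<delta> = (\<integral>y. (\<phi>1 y - \<phi>2 y) *\<^sub>R eta_potential y \<partial>\<mu>)"
    if d: "0 < \<delta>" "\<delta> < \<rho>" for \<delta>
  proof -
    define T where "T \<phi> z = (\<integral>y. \<phi> y *\<^sub>R Kd \<Omega> s \<delta> (z - y) \<partial>\<mu>)" for \<phi> z
    have int: "integrable \<mu> (\<lambda>z. \<eta> z *\<^sub>R T \<phi> z)" if cut: "adapted_cutoff c r \<phi>" for c r \<phi>
    proof -
      note [measurable] = cutoff_measurable[OF cut]
      obtain b where "\<And>z. norm (T \<phi> z) \<le> b"
        using bounded_cutoff_potential[OF cut d(1)] unfolding T_def by blast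
      then show ?thesis by (intro integrable_eta_scaleR_bounded) (auto simp: T_def)
    qed
    have "T \<phi>1 z - T \<phi>2 z = (\<integral>y. (\<phi>1 y - \<phi>2 y) *\<^sub>R Kd \<Omega> s \<delta> (z - y) \<partial>\<mu>)" for z
      unfolding T_def scaleR_diff_left
      by (intro Bochner_Integration.integral_diff[symmetric] integrable_cutoff_Kd[OF cut1 d(1)] integrable_cutoff_Kd[OF cut2 d(1)])
    then have "pairing \<phi>1 \<delta> - pairing \<phi>2 \<delta>
        = (\<integral>z. \<eta> z *\<^sub>R (\<integral>y. (\<phi>1 y - \<phi>2 y) *\<^sub>R Kd \<Omega> s \<delta> (z - y) \<partial>\<mu>) \<partial>\<mu>)"
      unfolding pairing_eq T_def[symmetric]
      using Bochner_Integration.integral_diff[OF int[OF cut1] int[OF cut2]] by (simp flip: scaleR_diff_right)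
    also have "\<dots> = (\<integral>y. (\<phi>1 y - \<phi>2 y) *\<^sub>R eta_potential y \<partial>\<mu>)"
      using d \<rho> compact_tsupport_cutoff[OF cut1] compact_tsupport_cutoff[OF cut2] abs_cutoff_diff_le_1[OF cut1 cut2]
      by (intro eta_average_g_Kd_eq[where \<rho>=\<rho>] compact_tsupport_diff cut1 cut2) auto
    finally show ?thesis .
  qed
  then show ?thesis
    by (rule eventually_at_right_real[OF \<rho>(1), THEN eventually_mono]) auto
qed

end

context cutoff_setting
begin

context
  fixes c r \<phi> assumes cut: "adapted_cutoff c r \<phi>"
begin

lemma eta_nonzero_imp_cutoff_eq_1: "\<eta> z \<noteq> 0 \<Longrightarrow> \<phi> z = 1"
  using eta_nonzero_in_B' B'_subset_ball[OF cut] cutoff_eq_1[OF cut] cutoff_radius_pos[OF cut] by force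

text \<open>Oddness of \<open>K\<^sub>\<delta>\<close> lets us antisymmetrise the double integral defining the pairing.\<close>
lemma pairing_eq_antisym:
  assumes d: "0 < \<delta>"
  shows "pairing \<phi> \<delta> = (\<integral>(z, y). (1/2 * (\<eta> z * \<phi> y - \<eta> y * \<phi> z)) *\<^sub>R Kd \<Omega> s \<delta> (z - y) \<partial>(\<mu> \<Otimes>\<^sub>M \<mu>))"
proof -
  note [measurable] = cutoff_measurable[OF cut]
  define G where "G = (\<lambda>(z, y). (\<eta> z * \<phi> y) *\<^sub>R Kd \<Omega> s \<delta> (z - y))"
  define G' where "G' = (\<lambda>(z, y). (\<eta> y * \<phi> z) *\<^sub>R Kd \<Omega> s \<delta> (z - y))"
  have G_measurable [measurable]: "G \<in> borel_measurable (\<mu> \<Otimes>\<^sub>M \<mu>)" unfolding G_def by measurable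
  have "G (y, z) = - G' (z, y)" for y z
    using Kd_minus[of \<delta> "z - y"] by (simp add: G_def G'_def)
  then have swap: "(\<lambda>(z, y). G (y, z)) = (\<lambda>p. - G' p)"
    by (auto simp: fun_eq_iff)
  have G: "integrable (\<mu> \<Otimes>\<^sub>M \<mu>) G"
  proof (rule integrable_pair_bounded_compact_support[OF _ compact_tsupport_eta compact_tsupport_cutoff[OF cut],
        where b="M_eta * \<delta> powr (-s)"])
    fix p :: "(real^'n) \<times> (real^'n)"
    obtain z y where p: "p = (z, y)" by (cases p)
    show "G p \<noteq> 0 \<Longrightarrow> p \<in> tsupport \<eta> \<times> tsupport \<phi>" unfolding p G_def by (auto intro: tsupport_memI)
    have "\<eta> z * (\<phi> y * norm (Kd \<Omega> s \<delta> (z - y))) \<le> M_eta * \<delta> powr (-s)"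
      using eta_le_M_eta[of z] eta_nonneg[of z] norm_cutoff_Kd_le[OF cut d, of y z] cutoff_nonneg[OF cut, of y]
      by (intro mult_mono) auto
    then show "norm (G p) \<le> M_eta * \<delta> powr (-s)"
      using eta_nonneg[of z] cutoff_nonneg[OF cut, of y] unfolding p G_def by simp
  qed measurable
  have G': "integrable (\<mu> \<Otimes>\<^sub>M \<mu>) G'" and int_G': "integral\<^sup>L (\<mu> \<Otimes>\<^sub>M \<mu>) G' = - integral\<^sup>L (\<mu> \<Otimes>\<^sub>M \<mu>) G"
    using pair.integrable_product_swap[OF G] pair.integral_product_swap[OF G_measurable]
    unfolding swap by (simp_all add: fun_eq_iff minus_equation_iff[of "integral\<^sup>L _ G'"])
  have "pairing \<phi> \<delta> = (\<integral>z. (\<integral>y. G (z, y) \<partial>\<mu>) \<partial>\<mu>)"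
    unfolding pairing_eq G_def by (simp flip: scaleR_scaleR)
  also have "\<dots> = integral\<^sup>L (\<mu> \<Otimes>\<^sub>M \<mu>) G" by (rule pair.integral_fst'[OF G])
  also have "\<dots> = (1/2::real) *\<^sub>R (integral\<^sup>L (\<mu> \<Otimes>\<^sub>M \<mu>) G - integral\<^sup>L (\<mu> \<Otimes>\<^sub>M \<mu>) G')"
    unfolding int_G' by (simp add: scaleR_2[symmetric])
  also have "\<dots> = (\<integral>p. (1/2::real) *\<^sub>R (G p - G' p) \<partial>(\<mu> \<Otimes>\<^sub>M \<mu>))"
    using G G' by simp
  also have "\<dots> = (\<integral>(z, y). (1/2 * (\<eta> z * \<phi> y - \<eta> y * \<phi> z)) *\<^sub>R Kd \<Omega> s \<delta> (z - y) \<partial>(\<mu> \<Otimes>\<^sub>M \<mu>))"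
    by (intro Bochner_Integration.integral_cong) (auto simp: G_def G'_def algebra_simps)
  finally show ?thesis .
qed

lemma antisym_weight_le_M_eta: "\<bar>\<eta> z * \<phi> y - \<eta> y * \<phi> z\<bar> \<le> M_eta"
proof -
  have "0 \<le> \<eta> z * \<phi> y" "\<eta> z * \<phi> y \<le> M_eta" "0 \<le> \<eta> y * \<phi> z" "\<eta> y * \<phi> z \<le> M_eta"
    using eta_nonneg[of z] eta_nonneg[of y] eta_le_M_eta[of z] eta_le_M_eta[of y]
      cutoff_nonneg[OF cut, of y] cutoff_le_1[OF cut, of y] cutoff_nonneg[OF cut, of z] cutoff_le_1[OF cut, of z]
    by (auto intro: order_trans[OF mult_left_le])
  then show ?thesis by linarith
qed

text \<open>Near the diagonal both points lie in \<open>2B\<close>, where \<open>\<phi> = 1\<close>, so the antisymmetric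
  weight reduces to \<open>\<eta>(z) - \<eta>(y)\<close>.\<close>
lemma antisym_weight_lipschitz:
  assumes "dist z y < r"
  shows "\<bar>\<eta> z * \<phi> y - \<eta> y * \<phi> z\<bar> \<le> L_eta * dist z y"
proof (cases "\<eta> z = 0 \<and> \<eta> y = 0")
  case False
  then obtain u where u: "\<eta> u \<noteq> 0" "u = z \<or> u = y" by blast
  then have "dist c u < r" using eta_nonzero_in_B'[OF u(1)] B'_subset_ball[OF cut] by auto
  then have "z \<in> ball c (2 * r)" "y \<in> ball c (2 * r)"
    using u assms cutoff_radius_pos[OF cut] dist_triangle[of c z u] dist_triangle[of c y u]
    by (auto simp: dist_commute)
  then show ?thesis
    using cutoff_eq_1[OF cut] eta_lipschitz by (simp add: lipschitz_on_def dist_real_def)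
qed (use L_eta_nonneg in simp)

lemma antisym_weight_le:
  assumes \<beta>: "0 < \<beta>" "\<beta> \<le> 1"
  shows "\<bar>\<eta> z * \<phi> y - \<eta> y * \<phi> z\<bar> * dist z y powr (-s)
    \<le> indicator (tsupport \<phi>) z * (M_eta * r powr (-s) * indicator (tsupport \<phi>) y
        + L_eta * r powr (1 - \<beta>) * (indicator (ball z r) y * dist z y powr (-(s - \<beta>))))"
proof (cases "\<eta> z * \<phi> y - \<eta> y * \<phi> z = 0")
  case False
  have r: "0 < r" by (rule cutoff_radius_pos[OF cut])
  have "\<eta> z * \<phi> y \<noteq> 0 \<or> \<eta> y * \<phi> z \<noteq> 0" using False by auto
  then have S: "z \<in> tsupport \<phi>" "y \<in> tsupport \<phi>"
    using eta_nonzero_imp_cutoff_eq_1 by (auto intro: tsupport_memI)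
  have dpos: "0 < dist z y" using False by auto
  have rhs: "indicator (tsupport \<phi>) z * (M_eta * r powr (-s) * indicator (tsupport \<phi>) y
        + L_eta * r powr (1 - \<beta>) * (indicator (ball z r) y * dist z y powr (-(s - \<beta>))))
      = M_eta * r powr (-s) + L_eta * r powr (1 - \<beta>) * (indicator (ball z r) y * dist z y powr (-(s - \<beta>)))"
    using S by simp
  have nonneg: "0 \<le> L_eta * r powr (1 - \<beta>) * (indicator (ball z r) y * dist z y powr (-(s - \<beta>)))"
    using L_eta_nonneg by simp
  show ?thesis
  proof (cases "r \<le> dist z y")
    case True
    have "dist z y powr (-s) \<le> r powr (-s)" using True r s_pos by (intro powr_mono2') auto
    with antisym_weight_le_M_eta[of z y] have "\<bar>\<eta> z * \<phi> y - \<eta> y * \<phi> z\<bar> * dist z y powr (-s) \<le> M_eta * r powr (-s)"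
      by (intro mult_mono) auto
    then show ?thesis unfolding rhs using nonneg by linarith
  next
    case False
    have "\<bar>\<eta> z * \<phi> y - \<eta> y * \<phi> z\<bar> \<le> L_eta * dist z y"
      using False by (intro antisym_weight_lipschitz) simp
    then have "\<bar>\<eta> z * \<phi> y - \<eta> y * \<phi> z\<bar> * dist z y powr (-s) \<le> L_eta * (dist z y * dist z y powr (-s))"
      by (metis mult.assoc mult_right_mono powr_ge_zero)
    also have "dist z y * dist z y powr (-s) = dist z y powr ((1 - \<beta>) + (-(s - \<beta>)))"
      by (simp add: powr_mult_base)
    also have "\<dots> = dist z y powr (1 - \<beta>) * dist z y powr (-(s - \<beta>))"
      by (rule powr_add)
    also have "L_eta * \<dots> \<le> L_eta * (r powr (1 - \<beta>) * dist z y powr (-(s - \<beta>)))"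
      using L_eta_nonneg False dpos \<beta> by (intro mult_left_mono mult_right_mono powr_mono2) auto
    finally have X: "\<bar>\<eta> z * \<phi> y - \<eta> y * \<phi> z\<bar> * dist z y powr (-s)
        \<le> L_eta * (r powr (1 - \<beta>) * dist z y powr (-(s - \<beta>)))" .
    have "indicator (ball z r) y = (1::real)" using False by simp
    moreover have "0 \<le> M_eta * r powr (-s)" using M_eta_nonneg by simp
    ultimately show ?thesis unfolding rhs using X by (simp only: mult_1 mult.assoc)
  qed
qed (use M_eta_nonneg L_eta_nonneg in simp)

lemma integrable_antisym_majorant:
  "integrable (\<mu> \<Otimes>\<^sub>M \<mu>) (\<lambda>(z, y). \<bar>\<eta> z * \<phi> y - \<eta> y * \<phi> z\<bar> * dist z y powr (-s))"
proof (rule integrableI_nonneg)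
  note [measurable] = cutoff_measurable[OF cut]
  define \<beta> where "\<beta> = min 1 (s / 2)"
  have \<beta>: "0 < \<beta>" "\<beta> \<le> 1" "\<beta> < s" using s_pos by (auto simp: \<beta>_def)
  let ?S = "tsupport \<phi>"
  let ?w = "\<lambda>z y. \<bar>\<eta> z * \<phi> y - \<eta> y * \<phi> z\<bar> * dist z y powr (-s)"
  show "(\<lambda>(z, y). ?w z y) \<in> borel_measurable (\<mu> \<Otimes>\<^sub>M \<mu>)" by measurable
  have S_sets [measurable]: "?S \<in> sets borel"
    using compact_tsupport_cutoff[OF cut] by (simp add: compact_imp_closed borel_closed)
  obtain mS where mS: "emeasure \<mu> ?S = ennreal mS" "0 \<le> mS"
    using emeasure_compact_finite[OF compact_tsupport_cutoff[OF cut]] by (cases "emeasure \<mu> ?S") auto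
  define K where "K = M_eta * r powr (-s) * mS
    + L_eta * r powr (1 - \<beta>) * (C_inner \<Lambda> s (s - \<beta>) * r powr (s - (s - \<beta>)))"
  have "(\<integral>\<^sup>+y. ?w z y \<partial>\<mu>) \<le> ennreal K * indicator ?S z" for z
  proof (cases "z \<in> ?S")
    case True
    have "(\<integral>\<^sup>+y. ?w z y \<partial>\<mu>) \<le> ennreal K" unfolding K_def
    proof (rule nn_integral_le_lincomb2)
      fix y show "?w z y \<le> M_eta * r powr (-s) * indicator ?S y
          + L_eta * r powr (1 - \<beta>) * (indicator (ball z r) y * dist z y powr (-(s - \<beta>)))"
        using antisym_weight_le[OF \<beta>(1,2), of z y] True by simp
    qed (use mS M_eta_nonneg L_eta_nonneg \<beta> \<Lambda>_pos cutoff_radius_pos[OF cut] C_inner_pos[of \<Lambda> "s - \<beta>" s]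
          nn_integral_dist_powr_ball[OF cutoff_radius_pos[OF cut], of "s - \<beta>" z]
        in \<open>auto simp: sets_\<mu> ennreal_indicator\<close>)
    then show ?thesis using True by simp
  next
    case False
    have w0: "?w z y = 0" for y
    proof (rule order_antisym)
      show "?w z y \<le> 0" using antisym_weight_le[OF \<beta>(1,2), of z y] False by simp
    qed simp
    show ?thesis by (simp only: w0 ennreal_0) simp
  qed
  then have "(\<integral>\<^sup>+z. (\<integral>\<^sup>+y. ?w z y \<partial>\<mu>) \<partial>\<mu>) \<le> ennreal K * emeasure \<mu> ?S"
    by (subst nn_integral_cmult_indicator[symmetric]) (auto intro!: nn_integral_mono simp: sets_\<mu>)
  also have "\<dots> < \<infinity>" using mS by (simp add: ennreal_mult_less_top)
  finally show "(\<integral>\<^sup>+p. ennreal ((\<lambda>(z, y). ?w z y) p) \<partial>(\<mu> \<Otimes>\<^sub>M \<mu>)) < \<infinity>"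
    by (simp add: sigma_finite.nn_integral_fst[symmetric] case_prod_beta')
qed auto

lemma pairing_convergent: "\<exists>l. (pairing \<phi> \<longlongrightarrow> l) (at_right 0)"
proof -
  note [measurable] = cutoff_measurable[OF cut]
  define W where "W \<delta> = (\<lambda>(z, y). (1/2 * (\<eta> z * \<phi> y - \<eta> y * \<phi> z)) *\<^sub>R Kd \<Omega> s \<delta> (z - y))" for \<delta>
  define W0 where "W0 = (\<lambda>(z, y). (1/2 * (\<eta> z * \<phi> y - \<eta> y * \<phi> z)) *\<^sub>R Ker \<Omega> s (z - y))"
  define w where "w = (\<lambda>(z, y). \<bar>\<eta> z * \<phi> y - \<eta> y * \<phi> z\<bar> * dist z y powr (-s))"
  have "norm (W \<delta> p) \<le> w p" if "0 < \<delta>" for \<delta> p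
  proof -
    obtain z y where p: "p = (z, y)" by (cases p)
    have "norm (Kd \<Omega> s \<delta> (z - y)) \<le> dist z y powr (-s)"
    proof (cases "z = y")
      case False
      then show ?thesis using norm_Kd_le[OF that, of "z - y"] powr_mono2'[of "-s" "norm (z - y)" "max \<delta> (norm (z - y))"] s_pos
        by (simp add: dist_norm)
    qed simp
    then have "norm (W \<delta> p) \<le> 1/2 * (\<bar>\<eta> z * \<phi> y - \<eta> y * \<phi> z\<bar> * dist z y powr (-s))"
      unfolding p W_def by (simp add: abs_mult mult_left_mono)
    also have "\<dots> \<le> w p" unfolding p w_def by simp
    finally show ?thesis .
  qed
  moreover have "((\<lambda>\<delta>. W \<delta> p) \<longlongrightarrow> W0 p) (at_right 0)" for p
  proof -
    obtain z y where p: "p = (z, y)" by (cases p)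
    have "\<forall>\<^sub>F \<delta> in at_right 0. W \<delta> p = W0 p"
    proof (cases "z = y")
      case False
      then have "\<forall>\<^sub>F \<delta> in at_right 0. \<delta> < norm (z - y)"
        by (intro eventually_mono[OF eventually_at_right_real[of 0 "norm (z - y)"]]) auto
      then show ?thesis by eventually_elim (simp add: p W_def W0_def Kd_eq_Ker)
    qed (simp add: p W_def W0_def)
    then show ?thesis by (rule tendsto_eventually)
  qed
  ultimately have "((\<lambda>t. integral\<^sup>L (\<mu> \<Otimes>\<^sub>M \<mu>) (W (inverse t))) \<longlongrightarrow> integral\<^sup>L (\<mu> \<Otimes>\<^sub>M \<mu>) W0) at_top"
    using integrable_antisym_majorant unfolding w_def[symmetric] filterlim_at_right_to_top
    by (intro integral_dominated_convergence_at_top[where w=w])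
      (auto simp: W_def W0_def intro!: AE_I2 eventually_mono[OF eventually_gt_at_top[of 0]])
  then have "((\<lambda>\<delta>. integral\<^sup>L (\<mu> \<Otimes>\<^sub>M \<mu>) (W \<delta>)) \<longlongrightarrow> integral\<^sup>L (\<mu> \<Otimes>\<^sub>M \<mu>) W0) (at_right 0)"
    unfolding filterlim_at_right_to_top .
  moreover have "\<forall>\<^sub>F \<delta> in at_right 0. integral\<^sup>L (\<mu> \<Otimes>\<^sub>M \<mu>) (W \<delta>) = pairing \<phi> \<delta>"
    by (rule eventually_mono[OF eventually_at_right_less]) (simp add: pairing_eq_antisym W_def)
  ultimately show ?thesis using Lim_transform_eventually by blast
qed

end

lemma TmuPair_diff:
  assumes cut1: "adapted_cutoff c1 r1 \<phi>1" and cut2: "adapted_cutoff c2 r2 \<phi>2"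
  shows "TmuPair \<Omega> s \<mu> \<phi>1 \<eta> - TmuPair \<Omega> s \<mu> \<phi>2 \<eta> = (\<integral>y. (\<phi>1 y - \<phi>2 y) *\<^sub>R eta_potential y \<partial>\<mu>)"
proof -
  define D where "D = (\<integral>y. (\<phi>1 y - \<phi>2 y) *\<^sub>R eta_potential y \<partial>\<mu>)"
  obtain l where l: "(pairing \<phi>1 \<longlongrightarrow> l) (at_right 0)" using pairing_convergent[OF cut1] by blast
  have "\<forall>\<^sub>F \<delta> in at_right 0. pairing \<phi>1 \<delta> - D = pairing \<phi>2 \<delta>"
    using pairing_diff_eventually_const[OF cut1 cut2] unfolding D_def
    by (rule eventually_mono) (simp add: algebra_simps)
  with tendsto_diff[OF l tendsto_const] have "(pairing \<phi>2 \<longlongrightarrow> l - D) (at_right 0)"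
    by (rule Lim_transform_eventually)
  with l show ?thesis
    unfolding TmuPair_eq_Lim_pairing D_def[symmetric] by (simp add: tendsto_Lim)
qed

lemma Ttilde_diff_le:
  assumes cut1: "adapted_cutoff c1 r1 \<phi>1" "x \<in> ball c1 r1"
    and cut2: "adapted_cutoff c2 r2 \<phi>2" "x' \<in> ball c2 r2" and d: "0 < \<delta>"
  shows "norm (Ttilde \<Omega> s \<mu> \<eta> \<delta> \<phi>1 x - Ttilde \<Omega> s \<mu> \<eta> \<delta> \<phi>2 x')
    \<le> C_main s \<alpha> \<Lambda> * holder_weight \<alpha> \<delta> (norm (x - x'))"
proof -
  define F1 where "F1 y = Kd \<Omega> s \<delta> (x - y) - (1 - \<phi>1 y) *\<^sub>R eta_potential y" for y
  define F2 where "F2 y = Kd \<Omega> s \<delta> (x' - y) - (1 - \<phi>2 y) *\<^sub>R eta_potential y" for y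
  define G where "G y = (\<phi>1 y - \<phi>2 y) *\<^sub>R eta_potential y" for y
  have F1: "integrable \<mu> F1" unfolding F1_def by (rule integrable_Ttilde_integrand[OF cut1 d])
  have F2: "integrable \<mu> F2" unfolding F2_def by (rule integrable_Ttilde_integrand[OF cut2 d])
  obtain \<rho> where \<rho>: "0 < \<rho>" "\<And>z y. \<eta> z \<noteq> 0 \<Longrightarrow> \<phi>1 y \<noteq> \<phi>2 y \<Longrightarrow> \<rho> \<le> dist z y"
    using cutoffs_differ_far_from_eta[OF cut1(1) cut2(1)] by blast
  have G: "integrable \<mu> G" unfolding G_def
    using abs_cutoff_diff_le_1[OF cut1(1) cut2(1)] cutoff_measurable[OF cut1(1)] cutoff_measurable[OF cut2(1)]
      compact_tsupport_diff[OF compact_tsupport_cutoff[OF cut1(1)] compact_tsupport_cutoff[OF cut2(1)]]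
    by (intro integrable_scaleR_eta_potential[where \<rho>=\<rho>] \<rho>) auto
  have P: "TmuPair \<Omega> s \<mu> \<phi>1 \<eta> = TmuPair \<Omega> s \<mu> \<phi>2 \<eta> + integral\<^sup>L \<mu> G"
    using TmuPair_diff[OF cut1(1) cut2(1)] unfolding G_def by (simp add: algebra_simps)
  have "Ttilde \<Omega> s \<mu> \<eta> \<delta> \<phi>1 x - Ttilde \<Omega> s \<mu> \<eta> \<delta> \<phi>2 x' = (\<integral>y. F1 y - F2 y - G y \<partial>\<mu>)"
    unfolding Ttilde_eq[OF cut1 d] Ttilde_eq[OF cut2 d] F1_def[symmetric] F2_def[symmetric] P
    using F1 F2 G by (simp add: algebra_simps)
  also have "(\<lambda>y. F1 y - F2 y - G y) = (\<lambda>y. Kd \<Omega> s \<delta> (x - y) - Kd \<Omega> s \<delta> (x' - y))"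
    by (simp add: fun_eq_iff F1_def F2_def G_def algebra_simps)
  finally have eq: "Ttilde \<Omega> s \<mu> \<eta> \<delta> \<phi>1 x - Ttilde \<Omega> s \<mu> \<eta> \<delta> \<phi>2 x'
      = (\<integral>y. Kd \<Omega> s \<delta> (x - y) - Kd \<Omega> s \<delta> (x' - y) \<partial>\<mu>)" .
  have "integrable \<mu> (\<lambda>y. Kd \<Omega> s \<delta> (x - y) - Kd \<Omega> s \<delta> (x' - y))"
    using Bochner_Integration.integrable_diff[OF Bochner_Integration.integrable_diff[OF F1 F2] G]
    by (simp add: F1_def F2_def G_def algebra_simps)
  then have "ennreal (norm (Ttilde \<Omega> s \<mu> \<eta> \<delta> \<phi>1 x - Ttilde \<Omega> s \<mu> \<eta> \<delta> \<phi>2 x'))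
      \<le> (\<integral>\<^sup>+y. norm (Kd \<Omega> s \<delta> (x - y) - Kd \<Omega> s \<delta> (x' - y)) \<partial>\<mu>)"
    unfolding eq by (rule integral_norm_bound_ennreal)
  also have "\<dots> \<le> ennreal (C_main s \<alpha> \<Lambda> * holder_weight \<alpha> \<delta> (norm (x - x')))"
    by (rule nn_integral_Kd_diff_le[OF d])
  finally show ?thesis
    using C_main_pos[OF s_pos \<alpha>_pos \<Lambda>_pos] holder_weight_nonneg[OF d _ \<alpha>_le_1, of "norm (x - x')"]
    by (simp add: ennreal_le_iff)
qed

end

theorem lemma6p1:
  fixes s \<alpha> \<Lambda> :: real
  assumes "CARD('n) \<ge> 2" and "0 < s" and "s < real CARD('n)"
    and "0 < \<alpha>" and "\<alpha> \<le> 1" and "0 < \<Lambda>"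
  shows "\<exists>C>0. \<forall>(\<Omega>::real^'n \<Rightarrow> complex^'m) \<mu> B' \<eta> \<delta> x x' B1 \<phi>1 B2 \<phi>2.
     omega_adm \<alpha> \<Omega> \<and> good \<Omega> s \<Lambda> \<mu> \<and> emeasure \<mu> UNIV \<noteq> 0 \<and> eta_adm \<mu> B' \<eta> \<and> 0 < \<delta>
     \<and> phi_adm \<mu> B' x B1 \<phi>1 \<and> phi_adm \<mu> B' x' B2 \<phi>2 \<longrightarrow>
     norm (Ttilde \<Omega> s \<mu> \<eta> \<delta> \<phi>1 x - Ttilde \<Omega> s \<mu> \<eta> \<delta> \<phi>2 x')
       \<le> C * norm (x - x') powr \<alpha> / \<delta> powr \<alpha> * max 1 (norm (x - x') / \<delta>) powr (1 - \<alpha>)"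
proof (intro exI[of _ "C_main s \<alpha> \<Lambda>"] conjI allI impI)
  show "0 < C_main s \<alpha> \<Lambda>" using assms by (intro C_main_pos)
  fix \<Omega> :: "real^'n \<Rightarrow> complex^'m" and \<mu> :: "(real^'n) measure" and B' B1 B2 :: "(real^'n) set"
    and \<eta> \<phi>1 \<phi>2 :: "real^'n \<Rightarrow> real" and \<delta> :: real and x x' :: "real^'n"
  assume H: "omega_adm \<alpha> \<Omega> \<and> good \<Omega> s \<Lambda> \<mu> \<and> emeasure \<mu> UNIV \<noteq> 0 \<and> eta_adm \<mu> B' \<eta> \<and> 0 < \<delta>
     \<and> phi_adm \<mu> B' x B1 \<phi>1 \<and> phi_adm \<mu> B' x' B2 \<phi>2"
  then interpret cutoff_setting \<Omega> s \<alpha> \<mu> \<Lambda> \<eta> B'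
    using assms by unfold_locales (auto simp: good_def nice_def)
  obtain c1 r1 c2 r2 where "adapted_cutoff c1 r1 \<phi>1" "x \<in> ball c1 r1" "adapted_cutoff c2 r2 \<phi>2" "x' \<in> ball c2 r2"
    using H phi_adm_imp_adapted_cutoff by metis
  from Ttilde_diff_le[OF this] H
  show "norm (Ttilde \<Omega> s \<mu> \<eta> \<delta> \<phi>1 x - Ttilde \<Omega> s \<mu> \<eta> \<delta> \<phi>2 x')
       \<le> C_main s \<alpha> \<Lambda> * norm (x - x') powr \<alpha> / \<delta> powr \<alpha> * max 1 (norm (x - x') / \<delta>) powr (1 - \<alpha>)"
    by (simp add: holder_weight_def mult.assoc)
qed

end
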